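(* Let $A$ be a bialgebra and $\Omega(A)=(H,\triangleleft,\triangleright,f)$ an extending datum of $A$ whose right action is trivial, i.e. $h\triangleleft a=\varepsilon_A(a)h$ for all $h\in H$, $a\in A$. Then $\Omega(A)$ is a bialgebra extending structure of $A$ if and only if $H$ is an (associative) bialgebra and, for all $g,h,l\in H$ and $a,b\in A$: (a) $[g_{(1)}\triangleright(h_{(1)}\triangleright a)]\,f(g_{(2)},h_{(2)})=f(g_{(1)},h_{(1)})\,((g_{(2)}h_{(2)})\triangleright a)$ and $(g_{(1)}\triangleright f(h_{(1)},l_{(1)}))\,f(g_{(2)},h_{(2)}l_{(2)})=f(g_{(1)},h_{(1)})\,f(g_{(2)}h_{(2)},l)$; (b) $g\triangleright(ab)=(g_{(1)}\triangleright a)(g_{(2)}\triangleright b)$; (c) $g_{(1)}\otimes g_{(2)}\triangleright a=g_{(2)}\otimes g_{(1)}\triangleright a$; (d) $g_{(1)}h_{(1)}\otimes f(g_{(2)},h_{(2)})=g_{(2)}h_{(2)}\otimes f(g_{(1)},h_{(1)})$. In this case $A\ltimes H$ is the crossed product $A\#_f H$, with multiplication $(a\#h)(c\#g)=a(h_{(1)}\triangleright c)f(h_{(2)},g_{(1)})\#h_{(3)}g_{(2)}$.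
   Context: $k$ is a field; Sweedler notation is used. An extending datum of a bialgebra $A$ is a system $(H,\triangleleft,\triangleright,f)$ where $H$ is a coalgebra $(\Delta_H,\varepsilon_H)$ with a unital, not necessarily associative multiplication (written $\cdot$ or juxtaposition) and unit $1_H$ with $\Delta_H(1_H)=1_H\otimes 1_H$, and $\triangleleft:H\otimes A\to H$, $\triangleright:H\otimes A\to A$, $f:H\otimes H\to A$ are coalgebra maps satisfying $h\triangleright 1_A=\varepsilon_H(h)1_A$, $1_H\triangleright a=a$, $1_H\triangleleft a=\varepsilon_A(a)1_H$, $h\triangleleft 1_A=h$, $f(h,1_H)=f(1_H,h)=\varepsilon_H(h)1_A$. $A\ltimes H$ is $A\otimes H$ with multiplication $(a\ltimes h)\bullet(c\ltimes g)=a(h_{(1)}\triangleright c_{(1)})f(h_{(2)}\triangleleft c_{(2)},g_{(1)})\ltimes(h_{(3)}\triangleleft c_{(3)})\cdot g_{(2)}$, unit $1_A\ltimes 1_H$ and tensor product coalgebra structure; $\Omega(A)$ is a bialgebra extending structure if this is a bialgebra. *)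

theory Defs
  imports Main "HOL.Vector_Spaces"
begin

text \<open>
  A k-vector space is a type 'v of class ab_group_add together with a
  scalar multiplication s satisfying the library locale predicate vector_space s.

  An element of V1 (x) ... (x) Vn is represented by a finite list of
  n-tuples (a finite sum of simple tensors).  Two such representatives denote the same
  element of the tensor product iff they agree under every n-linear form
  V1 x ... x Vn -> k (i.e. under every element of the dual of the tensor product,
  via the universal property).  A linear map into a tensor product is a function
  returning representatives that is linear modulo this equality.  Sweedler sums are
  list comprehensions over the chosen representative of the coproduct.
\<close>

definition lin_form :: "('k::field \<Rightarrow> 'v::ab_group_add \<Rightarrow> 'v) \<Rightarrow> ('v \<Rightarrow> 'k) \<Rightarrow> bool" where
  "lin_form s \<phi> \<longleftrightarrow> Vector_Spaces.linear s (*) \<phi>"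

definition form2 :: "('k::field \<Rightarrow> 'a::ab_group_add \<Rightarrow> 'a) \<Rightarrow> ('k \<Rightarrow> 'b::ab_group_add \<Rightarrow> 'b)
    \<Rightarrow> ('a \<Rightarrow> 'b \<Rightarrow> 'k) \<Rightarrow> bool" where
  "form2 s1 s2 \<beta> \<longleftrightarrow> (\<forall>y. lin_form s1 (\<lambda>x. \<beta> x y)) \<and> (\<forall>x. lin_form s2 (\<lambda>y. \<beta> x y))"

definition form3 :: "('k::field \<Rightarrow> 'a::ab_group_add \<Rightarrow> 'a) \<Rightarrow> ('k \<Rightarrow> 'b::ab_group_add \<Rightarrow> 'b)
    \<Rightarrow> ('k \<Rightarrow> 'c::ab_group_add \<Rightarrow> 'c) \<Rightarrow> ('a \<Rightarrow> 'b \<Rightarrow> 'c \<Rightarrow> 'k) \<Rightarrow> bool" where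
  "form3 s1 s2 s3 \<beta> \<longleftrightarrow> (\<forall>y z. lin_form s1 (\<lambda>x. \<beta> x y z)) \<and> (\<forall>x z. lin_form s2 (\<lambda>y. \<beta> x y z))
      \<and> (\<forall>x y. lin_form s3 (\<lambda>z. \<beta> x y z))"

definition form4 :: "('k::field \<Rightarrow> 'a::ab_group_add \<Rightarrow> 'a) \<Rightarrow> ('k \<Rightarrow> 'b::ab_group_add \<Rightarrow> 'b)
    \<Rightarrow> ('k \<Rightarrow> 'c::ab_group_add \<Rightarrow> 'c) \<Rightarrow> ('k \<Rightarrow> 'd::ab_group_add \<Rightarrow> 'd)
    \<Rightarrow> ('a \<Rightarrow> 'b \<Rightarrow> 'c \<Rightarrow> 'd \<Rightarrow> 'k) \<Rightarrow> bool" where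
  "form4 s1 s2 s3 s4 \<beta> \<longleftrightarrow> (\<forall>y z w. lin_form s1 (\<lambda>x. \<beta> x y z w)) \<and> (\<forall>x z w. lin_form s2 (\<lambda>y. \<beta> x y z w))
      \<and> (\<forall>x y w. lin_form s3 (\<lambda>z. \<beta> x y z w)) \<and> (\<forall>x y z. lin_form s4 (\<lambda>w. \<beta> x y z w))"

definition form6 :: "('k::field \<Rightarrow> 'a::ab_group_add \<Rightarrow> 'a) \<Rightarrow> ('k \<Rightarrow> 'b::ab_group_add \<Rightarrow> 'b)
    \<Rightarrow> ('k \<Rightarrow> 'c::ab_group_add \<Rightarrow> 'c) \<Rightarrow> ('k \<Rightarrow> 'd::ab_group_add \<Rightarrow> 'd)
    \<Rightarrow> ('k \<Rightarrow> 'e::ab_group_add \<Rightarrow> 'e) \<Rightarrow> ('k \<Rightarrow> 'f::ab_group_add \<Rightarrow> 'f)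
    \<Rightarrow> ('a \<Rightarrow> 'b \<Rightarrow> 'c \<Rightarrow> 'd \<Rightarrow> 'e \<Rightarrow> 'f \<Rightarrow> 'k) \<Rightarrow> bool" where
  "form6 s1 s2 s3 s4 s5 s6 \<beta> \<longleftrightarrow>
      (\<forall>x2 x3 x4 x5 x6. lin_form s1 (\<lambda>x1. \<beta> x1 x2 x3 x4 x5 x6))
    \<and> (\<forall>x1 x3 x4 x5 x6. lin_form s2 (\<lambda>x2. \<beta> x1 x2 x3 x4 x5 x6))
    \<and> (\<forall>x1 x2 x4 x5 x6. lin_form s3 (\<lambda>x3. \<beta> x1 x2 x3 x4 x5 x6))
    \<and> (\<forall>x1 x2 x3 x5 x6. lin_form s4 (\<lambda>x4. \<beta> x1 x2 x3 x4 x5 x6))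
    \<and> (\<forall>x1 x2 x3 x4 x6. lin_form s5 (\<lambda>x5. \<beta> x1 x2 x3 x4 x5 x6))
    \<and> (\<forall>x1 x2 x3 x4 x5. lin_form s6 (\<lambda>x6. \<beta> x1 x2 x3 x4 x5 x6))"

definition teq2 :: "('k::field \<Rightarrow> 'a::ab_group_add \<Rightarrow> 'a) \<Rightarrow> ('k \<Rightarrow> 'b::ab_group_add \<Rightarrow> 'b)
    \<Rightarrow> ('a \<times> 'b) list \<Rightarrow> ('a \<times> 'b) list \<Rightarrow> bool" where
  "teq2 s1 s2 xs ys \<longleftrightarrow> (\<forall>\<beta>. form2 s1 s2 \<beta> \<longrightarrow>
      sum_list (map (\<lambda>(x1,x2). \<beta> x1 x2) xs) = sum_list (map (\<lambda>(x1,x2). \<beta> x1 x2) ys))"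

definition teq3 :: "('k::field \<Rightarrow> 'a::ab_group_add \<Rightarrow> 'a) \<Rightarrow> ('k \<Rightarrow> 'b::ab_group_add \<Rightarrow> 'b)
    \<Rightarrow> ('k \<Rightarrow> 'c::ab_group_add \<Rightarrow> 'c)
    \<Rightarrow> ('a \<times> 'b \<times> 'c) list \<Rightarrow> ('a \<times> 'b \<times> 'c) list \<Rightarrow> bool" where
  "teq3 s1 s2 s3 xs ys \<longleftrightarrow> (\<forall>\<beta>. form3 s1 s2 s3 \<beta> \<longrightarrow>
      sum_list (map (\<lambda>(x1,x2,x3). \<beta> x1 x2 x3) xs) = sum_list (map (\<lambda>(x1,x2,x3). \<beta> x1 x2 x3) ys))"

definition teq4 :: "('k::field \<Rightarrow> 'a::ab_group_add \<Rightarrow> 'a) \<Rightarrow> ('k \<Rightarrow> 'b::ab_group_add \<Rightarrow> 'b)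
    \<Rightarrow> ('k \<Rightarrow> 'c::ab_group_add \<Rightarrow> 'c) \<Rightarrow> ('k \<Rightarrow> 'd::ab_group_add \<Rightarrow> 'd)
    \<Rightarrow> ('a \<times> 'b \<times> 'c \<times> 'd) list \<Rightarrow> ('a \<times> 'b \<times> 'c \<times> 'd) list \<Rightarrow> bool" where
  "teq4 s1 s2 s3 s4 xs ys \<longleftrightarrow> (\<forall>\<beta>. form4 s1 s2 s3 s4 \<beta> \<longrightarrow>
      sum_list (map (\<lambda>(x1,x2,x3,x4). \<beta> x1 x2 x3 x4) xs)
    = sum_list (map (\<lambda>(x1,x2,x3,x4). \<beta> x1 x2 x3 x4) ys))"

definition teq6 :: "('k::field \<Rightarrow> 'a::ab_group_add \<Rightarrow> 'a) \<Rightarrow> ('k \<Rightarrow> 'b::ab_group_add \<Rightarrow> 'b)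
    \<Rightarrow> ('k \<Rightarrow> 'c::ab_group_add \<Rightarrow> 'c) \<Rightarrow> ('k \<Rightarrow> 'd::ab_group_add \<Rightarrow> 'd)
    \<Rightarrow> ('k \<Rightarrow> 'e::ab_group_add \<Rightarrow> 'e) \<Rightarrow> ('k \<Rightarrow> 'f::ab_group_add \<Rightarrow> 'f)
    \<Rightarrow> ('a \<times> 'b \<times> 'c \<times> 'd \<times> 'e \<times> 'f) list \<Rightarrow> ('a \<times> 'b \<times> 'c \<times> 'd \<times> 'e \<times> 'f) list \<Rightarrow> bool" where
  "teq6 s1 s2 s3 s4 s5 s6 xs ys \<longleftrightarrow> (\<forall>\<beta>. form6 s1 s2 s3 s4 s5 s6 \<beta> \<longrightarrow>
      sum_list (map (\<lambda>(x1,x2,x3,x4,x5,x6). \<beta> x1 x2 x3 x4 x5 x6) xs)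
    = sum_list (map (\<lambda>(x1,x2,x3,x4,x5,x6). \<beta> x1 x2 x3 x4 x5 x6) ys))"

text \<open>A vector space with (possibly non-associative) multiplication, unit, coproduct
  (given by representatives in V (x) V) and counit.\<close>

record ('k, 'v) bistr =
  scl :: "'k \<Rightarrow> 'v \<Rightarrow> 'v"
  mul :: "'v \<Rightarrow> 'v \<Rightarrow> 'v"
  one :: 'v
  cop :: "'v \<Rightarrow> ('v \<times> 'v) list"
  cou :: "'v \<Rightarrow> 'k"

definition bilin :: "('k::field \<Rightarrow> 'a::ab_group_add \<Rightarrow> 'a) \<Rightarrow> ('k \<Rightarrow> 'b::ab_group_add \<Rightarrow> 'b)
    \<Rightarrow> ('k \<Rightarrow> 'c::ab_group_add \<Rightarrow> 'c) \<Rightarrow> ('a \<Rightarrow> 'b \<Rightarrow> 'c) \<Rightarrow> bool" where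
  "bilin s1 s2 s3 m \<longleftrightarrow> (\<forall>y. Vector_Spaces.linear s1 s3 (\<lambda>x. m x y))
     \<and> (\<forall>x. Vector_Spaces.linear s2 s3 (\<lambda>y. m x y))"

text \<open>(\<Delta> \<otimes> id) \<Delta>, i.e. the Sweedler triple x(1) (x) x(2) (x) x(3).\<close>
definition cop3 :: "('k, 'v) bistr \<Rightarrow> 'v \<Rightarrow> ('v \<times> 'v \<times> 'v) list" where
  "cop3 C x = [(u1, u2, v). (u, v) \<leftarrow> cop C x, (u1, u2) \<leftarrow> cop C u]"

definition coalg :: "('k::field, 'v::ab_group_add) bistr \<Rightarrow> bool" where
  "coalg C \<longleftrightarrow> vector_space (scl C)
    \<and> (\<forall>x y. teq2 (scl C) (scl C) (cop C (x + y)) (cop C x @ cop C y))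
    \<and> (\<forall>c x. teq2 (scl C) (scl C) (cop C (scl C c x)) [(scl C c u, v). (u, v) \<leftarrow> cop C x])
    \<and> lin_form (scl C) (cou C)
    \<and> (\<forall>x. teq3 (scl C) (scl C) (scl C) (cop3 C x)
            [(u, v1, v2). (u, v) \<leftarrow> cop C x, (v1, v2) \<leftarrow> cop C v])
    \<and> (\<forall>x. sum_list [scl C (cou C u) v. (u, v) \<leftarrow> cop C x] = x)
    \<and> (\<forall>x. sum_list [scl C (cou C v) u. (u, v) \<leftarrow> cop C x] = x)"

definition alg :: "('k::field, 'v::ab_group_add) bistr \<Rightarrow> bool" where
  "alg C \<longleftrightarrow> vector_space (scl C) \<and> bilin (scl C) (scl C) (scl C) (mul C)
    \<and> (\<forall>x y z. mul C (mul C x y) z = mul C x (mul C y z))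
    \<and> (\<forall>x. mul C (one C) x = x \<and> mul C x (one C) = x)"

definition bialg :: "('k::field, 'v::ab_group_add) bistr \<Rightarrow> bool" where
  "bialg C \<longleftrightarrow> alg C \<and> coalg C
    \<and> (\<forall>x y. teq2 (scl C) (scl C) (cop C (mul C x y))
              [(mul C x1 y1, mul C x2 y2). (x1, x2) \<leftarrow> cop C x, (y1, y2) \<leftarrow> cop C y])
    \<and> teq2 (scl C) (scl C) (cop C (one C)) [(one C, one C)]
    \<and> (\<forall>x y. cou C (mul C x y) = cou C x * cou C y)
    \<and> cou C (one C) = 1"

text \<open>A linear map F : X (x) Y \<rightarrow> Z (given as a bilinear map) that is a coalgebra map,
  X (x) Y carrying the tensor product coalgebra structure.\<close>
definition coalg_map2 :: "('k::field, 'x::ab_group_add) bistr \<Rightarrow> ('k, 'y::ab_group_add) bistr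
    \<Rightarrow> ('k, 'z::ab_group_add) bistr \<Rightarrow> ('x \<Rightarrow> 'y \<Rightarrow> 'z) \<Rightarrow> bool" where
  "coalg_map2 X Y Z F \<longleftrightarrow> bilin (scl X) (scl Y) (scl Z) F
    \<and> (\<forall>x y. teq2 (scl Z) (scl Z) (cop Z (F x y))
              [(F x1 y1, F x2 y2). (x1, x2) \<leftarrow> cop X x, (y1, y2) \<leftarrow> cop Y y])
    \<and> (\<forall>x y. cou Z (F x y) = cou X x * cou Y y)"

text \<open>ra = right action (H (x) A \<rightarrow> H), la = left action (H (x) A \<rightarrow> A), f : H (x) H \<rightarrow> A.\<close>
definition ext_datum :: "('k::field, 'a::ab_group_add) bistr \<Rightarrow> ('k, 'h::ab_group_add) bistr
    \<Rightarrow> ('h \<Rightarrow> 'a \<Rightarrow> 'h) \<Rightarrow> ('h \<Rightarrow> 'a \<Rightarrow> 'a) \<Rightarrow> ('h \<Rightarrow> 'h \<Rightarrow> 'a) \<Rightarrow> bool" where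
  "ext_datum A H ra la f \<longleftrightarrow> coalg H
    \<and> bilin (scl H) (scl H) (scl H) (mul H)
    \<and> (\<forall>h. mul H (one H) h = h \<and> mul H h (one H) = h)
    \<and> teq2 (scl H) (scl H) (cop H (one H)) [(one H, one H)]
    \<and> coalg_map2 H A H ra \<and> coalg_map2 H A A la \<and> coalg_map2 H H A f
    \<and> (\<forall>h. la h (one A) = scl A (cou H h) (one A))
    \<and> (\<forall>a. la (one H) a = a)
    \<and> (\<forall>a. ra (one H) a = scl H (cou A a) (one H))
    \<and> (\<forall>h. ra h (one A) = h)
    \<and> (\<forall>h. f h (one H) = scl A (cou H h) (one A) \<and> f (one H) h = scl A (cou H h) (one A))"

text \<open>The multiplication of A \<ltimes> H on simple tensors a \<ltimes> h, c \<ltimes> g: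
  a (h(1) \<triangleright> c(1)) f(h(2) \<triangleleft> c(2), g(1)) \<ltimes> (h(3) \<triangleleft> c(3)) g(2).\<close>
definition smash :: "('k, 'a) bistr \<Rightarrow> ('k, 'h) bistr
    \<Rightarrow> ('h \<Rightarrow> 'a \<Rightarrow> 'h) \<Rightarrow> ('h \<Rightarrow> 'a \<Rightarrow> 'a) \<Rightarrow> ('h \<Rightarrow> 'h \<Rightarrow> 'a)
    \<Rightarrow> ('a \<times> 'h) \<Rightarrow> ('a \<times> 'h) \<Rightarrow> ('a \<times> 'h) list" where
  "smash A H ra la f p q = (case p of (a, h) \<Rightarrow> case q of (c, g) \<Rightarrow>
     [(mul A (mul A a (la h1 c1)) (f (ra h2 c2) g1), mul H (ra h3 c3) g2).
        (h1, h2, h3) \<leftarrow> cop3 H h, (c1, c2, c3) \<leftarrow> cop3 A c, (g1, g2) \<leftarrow> cop H g])"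

definition smul :: "('k, 'a) bistr \<Rightarrow> ('k, 'h) bistr
    \<Rightarrow> ('h \<Rightarrow> 'a \<Rightarrow> 'h) \<Rightarrow> ('h \<Rightarrow> 'a \<Rightarrow> 'a) \<Rightarrow> ('h \<Rightarrow> 'h \<Rightarrow> 'a)
    \<Rightarrow> ('a \<times> 'h) list \<Rightarrow> ('a \<times> 'h) list \<Rightarrow> ('a \<times> 'h) list" where
  "smul A H ra la f xs ys = [r. p \<leftarrow> xs, q \<leftarrow> ys, r \<leftarrow> smash A H ra la f p q]"

text \<open>Tensor product coalgebra structure of A (x) H; an element of (A (x) H) (x) (A (x) H)
  is represented by 4-tuples (a1, h1, a2, h2) meaning (a1 \<ltimes> h1) (x) (a2 \<ltimes> h2).\<close>
definition copT :: "('k, 'a) bistr \<Rightarrow> ('k, 'h) bistr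
    \<Rightarrow> ('a \<times> 'h) list \<Rightarrow> ('a \<times> 'h \<times> 'a \<times> 'h) list" where
  "copT A H xs = [(a1, h1, a2, h2). (a, h) \<leftarrow> xs, (a1, a2) \<leftarrow> cop A a, (h1, h2) \<leftarrow> cop H h]"

definition couT :: "('k::field, 'a) bistr \<Rightarrow> ('k, 'h) bistr \<Rightarrow> ('a \<times> 'h) list \<Rightarrow> 'k" where
  "couT A H xs = sum_list [cou A a * cou H h. (a, h) \<leftarrow> xs]"

definition prodT :: "('k, 'a) bistr \<Rightarrow> ('k, 'h) bistr
    \<Rightarrow> ('h \<Rightarrow> 'a \<Rightarrow> 'h) \<Rightarrow> ('h \<Rightarrow> 'a \<Rightarrow> 'a) \<Rightarrow> ('h \<Rightarrow> 'h \<Rightarrow> 'a)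
    \<Rightarrow> ('a \<times> 'h \<times> 'a \<times> 'h) list \<Rightarrow> ('a \<times> 'h \<times> 'a \<times> 'h) list \<Rightarrow> ('a \<times> 'h \<times> 'a \<times> 'h) list" where
  "prodT A H ra la f ps qs = [(a, h, b, l). (a1, h1, a2, h2) \<leftarrow> ps, (b1, l1, b2, l2) \<leftarrow> qs,
       (a, h) \<leftarrow> smash A H ra la f (a1, h1) (b1, l1), (b, l) \<leftarrow> smash A H ra la f (a2, h2) (b2, l2)]"

text \<open>\<Omega>(A) is a bialgebra extending structure: A \<ltimes> H (with unit 1 \<ltimes> 1 and the tensor
  product coalgebra structure) is a bialgebra.  Elements of A \<ltimes> H are arbitrary
  representatives (finite sums of simple tensors); equalities are in the tensor products.\<close>
definition bialg_ext :: "('k::field, 'a::ab_group_add) bistr \<Rightarrow> ('k, 'h::ab_group_add) bistr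
    \<Rightarrow> ('h \<Rightarrow> 'a \<Rightarrow> 'h) \<Rightarrow> ('h \<Rightarrow> 'a \<Rightarrow> 'a) \<Rightarrow> ('h \<Rightarrow> 'h \<Rightarrow> 'a) \<Rightarrow> bool" where
  "bialg_ext A H ra la f \<longleftrightarrow>
    (let sA = scl A; sH = scl H; m = smul A H ra la f; u = [(one A, one H)] in
      (\<forall>xs ys zs. teq2 sA sH (m (m xs ys) zs) (m xs (m ys zs)))
    \<and> (\<forall>xs. teq2 sA sH (m u xs) xs \<and> teq2 sA sH (m xs u) xs)
    \<and> (\<forall>xs. teq6 sA sH sA sH sA sH
          [(a11, h11, a12, h12, a2, h2). (a1, h1, a2, h2) \<leftarrow> copT A H xs,
               (a11, h11, a12, h12) \<leftarrow> copT A H [(a1, h1)]]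
          [(a1, h1, a21, h21, a22, h22). (a1, h1, a2, h2) \<leftarrow> copT A H xs,
               (a21, h21, a22, h22) \<leftarrow> copT A H [(a2, h2)]])
    \<and> (\<forall>xs. teq2 sA sH [(sA (cou A a1 * cou H h1) a2, h2). (a1, h1, a2, h2) \<leftarrow> copT A H xs] xs)
    \<and> (\<forall>xs. teq2 sA sH [(sA (cou A a2 * cou H h2) a1, h1). (a1, h1, a2, h2) \<leftarrow> copT A H xs] xs)
    \<and> (\<forall>xs ys. teq4 sA sH sA sH (copT A H (m xs ys)) (prodT A H ra la f (copT A H xs) (copT A H ys)))
    \<and> teq4 sA sH sA sH (copT A H u) [(one A, one H, one A, one H)]
    \<and> (\<forall>xs ys. couT A H (m xs ys) = couT A H xs * couT A H ys)
    \<and> couT A H u = 1)"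

end

theory Submission
  imports Defs
begin

text \<open>
  Counitality of A collapses the product of A \<ltimes> H to the crossed product formula
  (a \<ltimes> h)(c \<ltimes> g) = a (h(1) \<triangleright> c) f(h(2), g(1)) \<ltimes> h(3) g(2)  (lemma smash_normal_form).
  Equality in a tensor product is defined by testing against multilinear forms, so every
  identity below is an identity between scalar Sweedler sums of such a form.

  Sufficiency (locale crossed_conditions): associativity of A \<ltimes> H follows from the
  twisted module and cocycle conditions (a) and the measuring condition (b);
  multiplicativity of the comultiplication follows from the swap conditions (c) and (d);
  the unit and coalgebra axioms hold for every such datum.  Each identity is proved by
  expanding both sides into nested Sweedler sums, normalising them with coassociativity
  and counitality, and rewriting inside with one of the conditions.

  Necessity (locale trivial_bialg_ext): H inherits its bialgebra structure from 1 \<ltimes> H,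
  and each condition is recovered by evaluating associativity or comultiplicativity of
  A \<ltimes> H on simple tensors 1 \<ltimes> g, a \<ltimes> 1 against multilinear forms built from the
  counits; as linear forms separate points (lemma linear_forms_separate) this gives
  equalities in A.
\<close>

section \<open>Sweedler sums\<close>

text \<open>The Sweedler sum of F over a representative L of an element of V \<otimes> W, i.e. the sum
  of F u v over the simple tensors u \<otimes> v of L; for L = cop C x this is Sweedler's
  \<Sum> F(x(1), x(2)).\<close>
abbreviation sweedler_sum :: "('a \<times> 'b) list \<Rightarrow> ('a \<Rightarrow> 'b \<Rightarrow> 'z::monoid_add) \<Rightarrow> 'z"
    ("\<Sum>\<^sub>S _ _" [1000, 1000] 900)
  where "\<Sum>\<^sub>S L F \<equiv> sum_list (map (case_prod F) L)"

lemma sum_list_concat: "sum_list (concat xss) = sum_list (map sum_list xss)"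
  by (induct xss) auto

lemma sweedler_sum_add:
  "\<Sum>\<^sub>S L (\<lambda>u v. F u v + G u v) = (\<Sum>\<^sub>S L (\<lambda>u v. F u v) + \<Sum>\<^sub>S L (\<lambda>u v. G u v) :: 'a::comm_monoid_add)"
  by (induct L) (auto simp: algebra_simps)

lemma sweedler_sum_zero: "\<Sum>\<^sub>S L (\<lambda>u v. 0) = (0::'a::monoid_add)"
  by (induct L) auto

lemma sweedler_sum_distrib_left:
  "(c::'a::semiring_0) * \<Sum>\<^sub>S L (\<lambda>u v. F u v) = \<Sum>\<^sub>S L (\<lambda>u v. c * F u v)"
  by (induct L) (auto simp: algebra_simps)

lemma sweedler_sum_distrib_right:
  "\<Sum>\<^sub>S L (\<lambda>u v. F u v) * (c::'a::semiring_0) = \<Sum>\<^sub>S L (\<lambda>u v. F u v * c)"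
  by (induct L) (auto simp: algebra_simps)

lemma sweedler_sum_factor_left: "\<Sum>\<^sub>S L (\<lambda>u v. (c::'a::semiring_0) * F u v) = c * \<Sum>\<^sub>S L (\<lambda>u v. F u v)"
  by (rule sweedler_sum_distrib_left[symmetric])

lemma sweedler_sum_cong: "(\<And>u v. F u v = G u v) \<Longrightarrow> \<Sum>\<^sub>S L (\<lambda>u v. F u v) = \<Sum>\<^sub>S L (\<lambda>u v. G u v)"
  by simp

lemma additive_sweedler_sum: "(\<forall>x y. G (x + y) = G x + G y) \<Longrightarrow> G 0 = 0 \<Longrightarrow>
  G (\<Sum>\<^sub>S L (\<lambda>u v. F u v)) = \<Sum>\<^sub>S L (\<lambda>u v. G (F u v))"
  by (induct L) auto

lemma sweedler_sum_swap: "\<Sum>\<^sub>S M (\<lambda>x y. \<Sum>\<^sub>S N (\<lambda>p q. G x y p q)) =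
  (\<Sum>\<^sub>S N (\<lambda>p q. \<Sum>\<^sub>S M (\<lambda>x y. G x y p q)) :: 'z::comm_monoid_add)"
proof (induct M)
  case Nil then show ?case by (simp add: sweedler_sum_zero)
next
  case (Cons a M) then show ?case by (cases a) (simp add: sweedler_sum_add)
qed

lemma sum_list_map_cong: "(\<And>x. x \<in> set L \<Longrightarrow> F x = G x) \<Longrightarrow> sum_list (map F L) = sum_list (map G L)"
  by (simp cong: map_cong)

lemma sum_list_map_swap: "sum_list (map (\<lambda>x. sum_list (map (\<lambda>y. F x y) N)) M) =
  (sum_list (map (\<lambda>y. sum_list (map (\<lambda>x. F x y) M)) N) :: 'z::comm_monoid_add)"
proof (induct M)
  case Nil then show ?case by (induct N) auto
next
  case (Cons a M) then show ?case by (simp add: sum_list_addf)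
qed

lemma sum_list_map_mult: "sum_list (map F xs) * sum_list (map G ys) =
  (sum_list (map (\<lambda>x. sum_list (map (\<lambda>y. F x * G y) ys)) xs) :: 'z::semiring_0)"
  by (induct xs) (auto simp: distrib_right sum_list_const_mult)

text \<open>In a sum over cop C x with Sweedler components u, v, an inner sum over
  cop C u (resp. cop C v), nested below up to seven sums that do not depend on u (resp. on u
  and v), is moved up directly below the binder of u, v.  Used as simplification rules they
  bring iterated coproducts into the shape where coassociativity applies; rules for each
  nesting depth are needed because a general interchange rule would loop.\<close>

lemma hoist_u1:
  "\<Sum>\<^sub>S L (\<lambda>u v. \<Sum>\<^sub>S (K1 v) (\<lambda>x1 y1.
    \<Sum>\<^sub>S (cop C u) (\<lambda>p q.
      F u v x1 y1 p q)))
   = (\<Sum>\<^sub>S L (\<lambda>u v. \<Sum>\<^sub>S (cop C u) (\<lambda>p q.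
     \<Sum>\<^sub>S (K1 v) (\<lambda>x1 y1.
       F u v x1 y1 p q))) :: 'z::comm_monoid_add)"
  by (intro sweedler_sum_cong) (simp only: sweedler_sum_swap[where N = "cop C _"])

lemma hoist_v1:
  "\<Sum>\<^sub>S L (\<lambda>u v. \<Sum>\<^sub>S K1 (\<lambda>x1 y1.
    \<Sum>\<^sub>S (cop C v) (\<lambda>p q.
      F u v x1 y1 p q)))
   = (\<Sum>\<^sub>S L (\<lambda>u v. \<Sum>\<^sub>S (cop C v) (\<lambda>p q.
     \<Sum>\<^sub>S K1 (\<lambda>x1 y1.
       F u v x1 y1 p q))) :: 'z::comm_monoid_add)"
  by (intro sweedler_sum_cong) (simp only: sweedler_sum_swap[where N = "cop C _"])

lemma hoist_u2:
  "\<Sum>\<^sub>S L (\<lambda>u v. \<Sum>\<^sub>S (K1 v) (\<lambda>x1 y1.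
    \<Sum>\<^sub>S (K2 v x1 y1) (\<lambda>x2 y2. \<Sum>\<^sub>S (cop C u) (\<lambda>p q.
      F u v x1 y1 x2 y2 p q))))
   = (\<Sum>\<^sub>S L (\<lambda>u v. \<Sum>\<^sub>S (cop C u) (\<lambda>p q.
     \<Sum>\<^sub>S (K1 v) (\<lambda>x1 y1. \<Sum>\<^sub>S (K2 v x1 y1) (\<lambda>x2 y2.
       F u v x1 y1 x2 y2 p q)))) :: 'z::comm_monoid_add)"
  by (intro sweedler_sum_cong) (simp only: sweedler_sum_swap[where N = "cop C _"])

lemma hoist_v2:
  "\<Sum>\<^sub>S L (\<lambda>u v. \<Sum>\<^sub>S K1 (\<lambda>x1 y1.
    \<Sum>\<^sub>S (K2 x1 y1) (\<lambda>x2 y2. \<Sum>\<^sub>S (cop C v) (\<lambda>p q.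
      F u v x1 y1 x2 y2 p q))))
   = (\<Sum>\<^sub>S L (\<lambda>u v. \<Sum>\<^sub>S (cop C v) (\<lambda>p q.
     \<Sum>\<^sub>S K1 (\<lambda>x1 y1. \<Sum>\<^sub>S (K2 x1 y1) (\<lambda>x2 y2.
       F u v x1 y1 x2 y2 p q)))) :: 'z::comm_monoid_add)"
  by (intro sweedler_sum_cong) (simp only: sweedler_sum_swap[where N = "cop C _"])

lemma hoist_u3:
  "\<Sum>\<^sub>S L (\<lambda>u v. \<Sum>\<^sub>S (K1 v) (\<lambda>x1 y1.
    \<Sum>\<^sub>S (K2 v x1 y1) (\<lambda>x2 y2. \<Sum>\<^sub>S (K3 v x1 y1 x2 y2) (\<lambda>x3 y3.
    \<Sum>\<^sub>S (cop C u) (\<lambda>p q.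
      F u v x1 y1 x2 y2 x3 y3 p q)))))
   = (\<Sum>\<^sub>S L (\<lambda>u v. \<Sum>\<^sub>S (cop C u) (\<lambda>p q.
     \<Sum>\<^sub>S (K1 v) (\<lambda>x1 y1. \<Sum>\<^sub>S (K2 v x1 y1) (\<lambda>x2 y2.
     \<Sum>\<^sub>S (K3 v x1 y1 x2 y2) (\<lambda>x3 y3.
       F u v x1 y1 x2 y2 x3 y3 p q))))) :: 'z::comm_monoid_add)"
  by (intro sweedler_sum_cong) (simp only: sweedler_sum_swap[where N = "cop C _"])

lemma hoist_v3:
  "\<Sum>\<^sub>S L (\<lambda>u v. \<Sum>\<^sub>S K1 (\<lambda>x1 y1.
    \<Sum>\<^sub>S (K2 x1 y1) (\<lambda>x2 y2. \<Sum>\<^sub>S (K3 x1 y1 x2 y2) (\<lambda>x3 y3.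
    \<Sum>\<^sub>S (cop C v) (\<lambda>p q.
      F u v x1 y1 x2 y2 x3 y3 p q)))))
   = (\<Sum>\<^sub>S L (\<lambda>u v. \<Sum>\<^sub>S (cop C v) (\<lambda>p q.
     \<Sum>\<^sub>S K1 (\<lambda>x1 y1. \<Sum>\<^sub>S (K2 x1 y1) (\<lambda>x2 y2.
     \<Sum>\<^sub>S (K3 x1 y1 x2 y2) (\<lambda>x3 y3.
       F u v x1 y1 x2 y2 x3 y3 p q))))) :: 'z::comm_monoid_add)"
  by (intro sweedler_sum_cong) (simp only: sweedler_sum_swap[where N = "cop C _"])

lemma hoist_u4:
  "\<Sum>\<^sub>S L (\<lambda>u v. \<Sum>\<^sub>S (K1 v) (\<lambda>x1 y1.
    \<Sum>\<^sub>S (K2 v x1 y1) (\<lambda>x2 y2. \<Sum>\<^sub>S (K3 v x1 y1 x2 y2) (\<lambda>x3 y3.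
    \<Sum>\<^sub>S (K4 v x1 y1 x2 y2 x3 y3) (\<lambda>x4 y4. \<Sum>\<^sub>S (cop C u) (\<lambda>p q.
      F u v x1 y1 x2 y2 x3 y3 x4 y4 p q))))))
   = (\<Sum>\<^sub>S L (\<lambda>u v. \<Sum>\<^sub>S (cop C u) (\<lambda>p q.
     \<Sum>\<^sub>S (K1 v) (\<lambda>x1 y1. \<Sum>\<^sub>S (K2 v x1 y1) (\<lambda>x2 y2.
     \<Sum>\<^sub>S (K3 v x1 y1 x2 y2) (\<lambda>x3 y3. \<Sum>\<^sub>S (K4 v x1 y1 x2 y2 x3 y3) (\<lambda>x4 y4.
       F u v x1 y1 x2 y2 x3 y3 x4 y4 p q)))))) :: 'z::comm_monoid_add)"
  by (intro sweedler_sum_cong) (simp only: sweedler_sum_swap[where N = "cop C _"])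

lemma hoist_v4:
  "\<Sum>\<^sub>S L (\<lambda>u v. \<Sum>\<^sub>S K1 (\<lambda>x1 y1.
    \<Sum>\<^sub>S (K2 x1 y1) (\<lambda>x2 y2. \<Sum>\<^sub>S (K3 x1 y1 x2 y2) (\<lambda>x3 y3.
    \<Sum>\<^sub>S (K4 x1 y1 x2 y2 x3 y3) (\<lambda>x4 y4. \<Sum>\<^sub>S (cop C v) (\<lambda>p q.
      F u v x1 y1 x2 y2 x3 y3 x4 y4 p q))))))
   = (\<Sum>\<^sub>S L (\<lambda>u v. \<Sum>\<^sub>S (cop C v) (\<lambda>p q.
     \<Sum>\<^sub>S K1 (\<lambda>x1 y1. \<Sum>\<^sub>S (K2 x1 y1) (\<lambda>x2 y2.
     \<Sum>\<^sub>S (K3 x1 y1 x2 y2) (\<lambda>x3 y3. \<Sum>\<^sub>S (K4 x1 y1 x2 y2 x3 y3) (\<lambda>x4 y4.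
       F u v x1 y1 x2 y2 x3 y3 x4 y4 p q)))))) :: 'z::comm_monoid_add)"
  by (intro sweedler_sum_cong) (simp only: sweedler_sum_swap[where N = "cop C _"])

lemma hoist_u5:
  "\<Sum>\<^sub>S L (\<lambda>u v. \<Sum>\<^sub>S (K1 v) (\<lambda>x1 y1.
    \<Sum>\<^sub>S (K2 v x1 y1) (\<lambda>x2 y2. \<Sum>\<^sub>S (K3 v x1 y1 x2 y2) (\<lambda>x3 y3.
    \<Sum>\<^sub>S (K4 v x1 y1 x2 y2 x3 y3) (\<lambda>x4 y4. \<Sum>\<^sub>S (K5 v x1 y1 x2 y2 x3 y3 x4 y4) (\<lambda>x5 y5.
    \<Sum>\<^sub>S (cop C u) (\<lambda>p q.
      F u v x1 y1 x2 y2 x3 y3 x4 y4 x5 y5 p q)))))))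
   = (\<Sum>\<^sub>S L (\<lambda>u v. \<Sum>\<^sub>S (cop C u) (\<lambda>p q.
     \<Sum>\<^sub>S (K1 v) (\<lambda>x1 y1. \<Sum>\<^sub>S (K2 v x1 y1) (\<lambda>x2 y2.
     \<Sum>\<^sub>S (K3 v x1 y1 x2 y2) (\<lambda>x3 y3. \<Sum>\<^sub>S (K4 v x1 y1 x2 y2 x3 y3) (\<lambda>x4 y4.
     \<Sum>\<^sub>S (K5 v x1 y1 x2 y2 x3 y3 x4 y4) (\<lambda>x5 y5.
       F u v x1 y1 x2 y2 x3 y3 x4 y4 x5 y5 p q))))))) :: 'z::comm_monoid_add)"
  by (intro sweedler_sum_cong) (simp only: sweedler_sum_swap[where N = "cop C _"])

lemma hoist_v5:
  "\<Sum>\<^sub>S L (\<lambda>u v. \<Sum>\<^sub>S K1 (\<lambda>x1 y1.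
    \<Sum>\<^sub>S (K2 x1 y1) (\<lambda>x2 y2. \<Sum>\<^sub>S (K3 x1 y1 x2 y2) (\<lambda>x3 y3.
    \<Sum>\<^sub>S (K4 x1 y1 x2 y2 x3 y3) (\<lambda>x4 y4. \<Sum>\<^sub>S (K5 x1 y1 x2 y2 x3 y3 x4 y4) (\<lambda>x5 y5.
    \<Sum>\<^sub>S (cop C v) (\<lambda>p q.
      F u v x1 y1 x2 y2 x3 y3 x4 y4 x5 y5 p q)))))))
   = (\<Sum>\<^sub>S L (\<lambda>u v. \<Sum>\<^sub>S (cop C v) (\<lambda>p q.
     \<Sum>\<^sub>S K1 (\<lambda>x1 y1. \<Sum>\<^sub>S (K2 x1 y1) (\<lambda>x2 y2.
     \<Sum>\<^sub>S (K3 x1 y1 x2 y2) (\<lambda>x3 y3. \<Sum>\<^sub>S (K4 x1 y1 x2 y2 x3 y3) (\<lambda>x4 y4.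
     \<Sum>\<^sub>S (K5 x1 y1 x2 y2 x3 y3 x4 y4) (\<lambda>x5 y5.
       F u v x1 y1 x2 y2 x3 y3 x4 y4 x5 y5 p q))))))) :: 'z::comm_monoid_add)"
  by (intro sweedler_sum_cong) (simp only: sweedler_sum_swap[where N = "cop C _"])

lemma hoist_u6:
  "\<Sum>\<^sub>S L (\<lambda>u v. \<Sum>\<^sub>S (K1 v) (\<lambda>x1 y1.
    \<Sum>\<^sub>S (K2 v x1 y1) (\<lambda>x2 y2. \<Sum>\<^sub>S (K3 v x1 y1 x2 y2) (\<lambda>x3 y3.
    \<Sum>\<^sub>S (K4 v x1 y1 x2 y2 x3 y3) (\<lambda>x4 y4. \<Sum>\<^sub>S (K5 v x1 y1 x2 y2 x3 y3 x4 y4) (\<lambda>x5 y5.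
    \<Sum>\<^sub>S (K6 v x1 y1 x2 y2 x3 y3 x4 y4 x5 y5) (\<lambda>x6 y6. \<Sum>\<^sub>S (cop C u) (\<lambda>p q.
      F u v x1 y1 x2 y2 x3 y3 x4 y4 x5 y5 x6 y6 p q))))))))
   = (\<Sum>\<^sub>S L (\<lambda>u v. \<Sum>\<^sub>S (cop C u) (\<lambda>p q.
     \<Sum>\<^sub>S (K1 v) (\<lambda>x1 y1. \<Sum>\<^sub>S (K2 v x1 y1) (\<lambda>x2 y2.
     \<Sum>\<^sub>S (K3 v x1 y1 x2 y2) (\<lambda>x3 y3. \<Sum>\<^sub>S (K4 v x1 y1 x2 y2 x3 y3) (\<lambda>x4 y4.
     \<Sum>\<^sub>S (K5 v x1 y1 x2 y2 x3 y3 x4 y4) (\<lambda>x5 y5. \<Sum>\<^sub>S (K6 v x1 y1 x2 y2 x3 y3 x4 y4 x5 y5) (\<lambda>x6 y6.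
       F u v x1 y1 x2 y2 x3 y3 x4 y4 x5 y5 x6 y6 p q)))))))) :: 'z::comm_monoid_add)"
  by (intro sweedler_sum_cong) (simp only: sweedler_sum_swap[where N = "cop C _"])

lemma hoist_v6:
  "\<Sum>\<^sub>S L (\<lambda>u v. \<Sum>\<^sub>S K1 (\<lambda>x1 y1.
    \<Sum>\<^sub>S (K2 x1 y1) (\<lambda>x2 y2. \<Sum>\<^sub>S (K3 x1 y1 x2 y2) (\<lambda>x3 y3.
    \<Sum>\<^sub>S (K4 x1 y1 x2 y2 x3 y3) (\<lambda>x4 y4. \<Sum>\<^sub>S (K5 x1 y1 x2 y2 x3 y3 x4 y4) (\<lambda>x5 y5.
    \<Sum>\<^sub>S (K6 x1 y1 x2 y2 x3 y3 x4 y4 x5 y5) (\<lambda>x6 y6. \<Sum>\<^sub>S (cop C v) (\<lambda>p q.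
      F u v x1 y1 x2 y2 x3 y3 x4 y4 x5 y5 x6 y6 p q))))))))
   = (\<Sum>\<^sub>S L (\<lambda>u v. \<Sum>\<^sub>S (cop C v) (\<lambda>p q.
     \<Sum>\<^sub>S K1 (\<lambda>x1 y1. \<Sum>\<^sub>S (K2 x1 y1) (\<lambda>x2 y2.
     \<Sum>\<^sub>S (K3 x1 y1 x2 y2) (\<lambda>x3 y3. \<Sum>\<^sub>S (K4 x1 y1 x2 y2 x3 y3) (\<lambda>x4 y4.
     \<Sum>\<^sub>S (K5 x1 y1 x2 y2 x3 y3 x4 y4) (\<lambda>x5 y5. \<Sum>\<^sub>S (K6 x1 y1 x2 y2 x3 y3 x4 y4 x5 y5) (\<lambda>x6 y6.
       F u v x1 y1 x2 y2 x3 y3 x4 y4 x5 y5 x6 y6 p q)))))))) :: 'z::comm_monoid_add)"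
  by (intro sweedler_sum_cong) (simp only: sweedler_sum_swap[where N = "cop C _"])

lemma hoist_u7:
  "\<Sum>\<^sub>S L (\<lambda>u v. \<Sum>\<^sub>S (K1 v) (\<lambda>x1 y1.
    \<Sum>\<^sub>S (K2 v x1 y1) (\<lambda>x2 y2. \<Sum>\<^sub>S (K3 v x1 y1 x2 y2) (\<lambda>x3 y3.
    \<Sum>\<^sub>S (K4 v x1 y1 x2 y2 x3 y3) (\<lambda>x4 y4. \<Sum>\<^sub>S (K5 v x1 y1 x2 y2 x3 y3 x4 y4) (\<lambda>x5 y5.
    \<Sum>\<^sub>S (K6 v x1 y1 x2 y2 x3 y3 x4 y4 x5 y5) (\<lambda>x6 y6. \<Sum>\<^sub>S (K7 v x1 y1 x2 y2 x3 y3 x4 y4 x5 y5 x6 y6) (\<lambda>x7 y7.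
    \<Sum>\<^sub>S (cop C u) (\<lambda>p q.
      F u v x1 y1 x2 y2 x3 y3 x4 y4 x5 y5 x6 y6 x7 y7 p q)))))))))
   = (\<Sum>\<^sub>S L (\<lambda>u v. \<Sum>\<^sub>S (cop C u) (\<lambda>p q.
     \<Sum>\<^sub>S (K1 v) (\<lambda>x1 y1. \<Sum>\<^sub>S (K2 v x1 y1) (\<lambda>x2 y2.
     \<Sum>\<^sub>S (K3 v x1 y1 x2 y2) (\<lambda>x3 y3. \<Sum>\<^sub>S (K4 v x1 y1 x2 y2 x3 y3) (\<lambda>x4 y4.
     \<Sum>\<^sub>S (K5 v x1 y1 x2 y2 x3 y3 x4 y4) (\<lambda>x5 y5. \<Sum>\<^sub>S (K6 v x1 y1 x2 y2 x3 y3 x4 y4 x5 y5) (\<lambda>x6 y6.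
     \<Sum>\<^sub>S (K7 v x1 y1 x2 y2 x3 y3 x4 y4 x5 y5 x6 y6) (\<lambda>x7 y7.
       F u v x1 y1 x2 y2 x3 y3 x4 y4 x5 y5 x6 y6 x7 y7 p q))))))))) :: 'z::comm_monoid_add)"
  by (intro sweedler_sum_cong) (simp only: sweedler_sum_swap[where N = "cop C _"])

lemma hoist_v7:
  "\<Sum>\<^sub>S L (\<lambda>u v. \<Sum>\<^sub>S K1 (\<lambda>x1 y1.
    \<Sum>\<^sub>S (K2 x1 y1) (\<lambda>x2 y2. \<Sum>\<^sub>S (K3 x1 y1 x2 y2) (\<lambda>x3 y3.
    \<Sum>\<^sub>S (K4 x1 y1 x2 y2 x3 y3) (\<lambda>x4 y4. \<Sum>\<^sub>S (K5 x1 y1 x2 y2 x3 y3 x4 y4) (\<lambda>x5 y5.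
    \<Sum>\<^sub>S (K6 x1 y1 x2 y2 x3 y3 x4 y4 x5 y5) (\<lambda>x6 y6. \<Sum>\<^sub>S (K7 x1 y1 x2 y2 x3 y3 x4 y4 x5 y5 x6 y6) (\<lambda>x7 y7.
    \<Sum>\<^sub>S (cop C v) (\<lambda>p q.
      F u v x1 y1 x2 y2 x3 y3 x4 y4 x5 y5 x6 y6 x7 y7 p q)))))))))
   = (\<Sum>\<^sub>S L (\<lambda>u v. \<Sum>\<^sub>S (cop C v) (\<lambda>p q.
     \<Sum>\<^sub>S K1 (\<lambda>x1 y1. \<Sum>\<^sub>S (K2 x1 y1) (\<lambda>x2 y2.
     \<Sum>\<^sub>S (K3 x1 y1 x2 y2) (\<lambda>x3 y3. \<Sum>\<^sub>S (K4 x1 y1 x2 y2 x3 y3) (\<lambda>x4 y4.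
     \<Sum>\<^sub>S (K5 x1 y1 x2 y2 x3 y3 x4 y4) (\<lambda>x5 y5. \<Sum>\<^sub>S (K6 x1 y1 x2 y2 x3 y3 x4 y4 x5 y5) (\<lambda>x6 y6.
     \<Sum>\<^sub>S (K7 x1 y1 x2 y2 x3 y3 x4 y4 x5 y5 x6 y6) (\<lambda>x7 y7.
       F u v x1 y1 x2 y2 x3 y3 x4 y4 x5 y5 x6 y6 x7 y7 p q))))))))) :: 'z::comm_monoid_add)"
  by (intro sweedler_sum_cong) (simp only: sweedler_sum_swap[where N = "cop C _"])

lemmas hoists = hoist_u1 hoist_v1 hoist_u2 hoist_v2 hoist_u3 hoist_v3 hoist_u4 hoist_v4
  hoist_u5 hoist_v5 hoist_u6 hoist_v6 hoist_u7 hoist_v7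

lemmas sweedler_simps = sum_list_concat map_concat map_map o_def prod.case_distrib
  sweedler_sum_add sweedler_sum_zero sweedler_sum_distrib_left sweedler_sum_distrib_right

section \<open>Multilinear forms\<close>

text \<open>Scalar-valued linear, bilinear and trilinear forms, stated without reference to the
  vector space structure; under that structure they agree with the forms of the definitions
  (lemmas lin_form_iff, form2_iff, form3_iff) and are easier to work with.\<close>

definition lin :: "('k::field \<Rightarrow> 'a::ab_group_add \<Rightarrow> 'a) \<Rightarrow> ('a \<Rightarrow> 'k) \<Rightarrow> bool" where
  "lin s G \<longleftrightarrow> (\<forall>x x'. G (x + x') = G x + G x') \<and> (\<forall>c x. G (s c x) = c * G x)"

definition bil :: "('k::field \<Rightarrow> 'a::ab_group_add \<Rightarrow> 'a) \<Rightarrow> ('k \<Rightarrow> 'b::ab_group_add \<Rightarrow> 'b)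
    \<Rightarrow> ('a \<Rightarrow> 'b \<Rightarrow> 'k) \<Rightarrow> bool" where
  "bil s1 s2 \<Phi> \<longleftrightarrow> (\<forall>x x' y. \<Phi> (x + x') y = \<Phi> x y + \<Phi> x' y)
     \<and> (\<forall>x y y'. \<Phi> x (y + y') = \<Phi> x y + \<Phi> x y')
     \<and> (\<forall>c x y. \<Phi> (s1 c x) y = c * \<Phi> x y)
     \<and> (\<forall>c x y. \<Phi> x (s2 c y) = c * \<Phi> x y)"

definition tril :: "('k::field \<Rightarrow> 'a::ab_group_add \<Rightarrow> 'a) \<Rightarrow> ('k \<Rightarrow> 'b::ab_group_add \<Rightarrow> 'b)
    \<Rightarrow> ('k \<Rightarrow> 'c::ab_group_add \<Rightarrow> 'c) \<Rightarrow> ('a \<Rightarrow> 'b \<Rightarrow> 'c \<Rightarrow> 'k) \<Rightarrow> bool" where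
  "tril s1 s2 s3 \<Phi> \<longleftrightarrow> (\<forall>x x' y z. \<Phi> (x + x') y z = \<Phi> x y z + \<Phi> x' y z)
     \<and> (\<forall>x y y' z. \<Phi> x (y + y') z = \<Phi> x y z + \<Phi> x y' z)
     \<and> (\<forall>x y z z'. \<Phi> x y (z + z') = \<Phi> x y z + \<Phi> x y z')
     \<and> (\<forall>c x y z. \<Phi> (s1 c x) y z = c * \<Phi> x y z)
     \<and> (\<forall>c x y z. \<Phi> x (s2 c y) z = c * \<Phi> x y z)
     \<and> (\<forall>c x y z. \<Phi> x y (s3 c z) = c * \<Phi> x y z)"

lemma vector_space_field: "vector_space ((*) :: 'k::field \<Rightarrow> 'k \<Rightarrow> 'k)"
  by unfold_locales (auto simp: algebra_simps)

lemma lin_form_iff: "vector_space s \<Longrightarrow> lin_form s G \<longleftrightarrow> lin s G"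
  unfolding lin_form_def lin_def linear_iff using vector_space_field by auto

lemma form2_iff: "vector_space s1 \<Longrightarrow> vector_space s2 \<Longrightarrow> form2 s1 s2 \<Phi> \<longleftrightarrow> bil s1 s2 \<Phi>"
  unfolding form2_def bil_def by (auto simp: lin_form_iff lin_def)

lemma form3_iff: "vector_space s1 \<Longrightarrow> vector_space s2 \<Longrightarrow> vector_space s3 \<Longrightarrow>
   form3 s1 s2 s3 \<Phi> \<longleftrightarrow> tril s1 s2 s3 \<Phi>"
  unfolding form3_def tril_def by (auto simp: lin_form_iff lin_def)

lemma linD:
  assumes "lin_form s G"
  shows "G (x + x') = G x + G x'" "G (s c x) = c * G x"
  using assms unfolding lin_form_def linear_iff by auto

lemma bilinD:
  assumes "bilin s1 s2 s3 m"
  shows "m (x + x') = (\<lambda>y. m x y + m x' y)" "m x (y + y') = m x y + m x y'"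
    "m (s1 c x) = (\<lambda>y. s3 c (m x y))" "m x (s2 c y) = s3 c (m x y)"
  using assms unfolding bilin_def linear_iff by auto

lemma bilD:
  assumes "bil s1 s2 m"
  shows "m (x + x') = (\<lambda>y. m x y + m x' y)" "m x (y + y') = m x y + m x y'"
    "m (s1 c x) = (\<lambda>y. c * m x y)" "m x (s2 c y) = c * m x y"
  using assms unfolding bil_def by auto

lemma form4D:
  assumes "form4 s1 s2 s3 s4 \<beta>"
  shows "\<beta> (x + x') = (\<lambda>y z w. \<beta> x y z w + \<beta> x' y z w)" "\<beta> x (y + y') = (\<lambda>z w. \<beta> x y z w + \<beta> x y' z w)"
    "\<beta> x y (z + z') = (\<lambda>w. \<beta> x y z w + \<beta> x y z' w)" "\<beta> x y z (w + w') = \<beta> x y z w + \<beta> x y z w'"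
    "\<beta> (s1 c x) = (\<lambda>y z w. c * \<beta> x y z w)" "\<beta> x (s2 c y) = (\<lambda>z w. c * \<beta> x y z w)"
    "\<beta> x y (s3 c z) = (\<lambda>w. c * \<beta> x y z w)" "\<beta> x y z (s4 c w) = c * \<beta> x y z w"
  using assms unfolding form4_def lin_form_def linear_iff by (auto simp: fun_eq_iff)

lemma form4I:
  assumes "vector_space s1" "vector_space s2" "vector_space s3" "vector_space s4"
    "\<forall>x x' y z w. \<beta> (x + x') y z w = \<beta> x y z w + \<beta> x' y z w"
    "\<forall>x y y' z w. \<beta> x (y + y') z w = \<beta> x y z w + \<beta> x y' z w"
    "\<forall>x y z z' w. \<beta> x y (z + z') w = \<beta> x y z w + \<beta> x y z' w"
    "\<forall>x y z w w'. \<beta> x y z (w + w') = \<beta> x y z w + \<beta> x y z w'"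
    "\<forall>c x y z w. \<beta> (s1 c x) y z w = c * \<beta> x y z w"
    "\<forall>c x y z w. \<beta> x (s2 c y) z w = c * \<beta> x y z w"
    "\<forall>c x y z w. \<beta> x y (s3 c z) w = c * \<beta> x y z w"
    "\<forall>c x y z w. \<beta> x y z (s4 c w) = c * \<beta> x y z w"
  shows "form4 s1 s2 s3 s4 \<beta>"
  using assms unfolding form4_def lin_form_def linear_iff using vector_space_field by auto

lemma form6D:
  assumes "form6 s1 s2 s3 s4 s5 s6 \<beta>"
  shows "\<beta> (x1 + x1') = (\<lambda>x2 x3 x4 x5 x6. \<beta> x1 x2 x3 x4 x5 x6 + \<beta> x1' x2 x3 x4 x5 x6)"
    "\<beta> x1 (x2 + x2') = (\<lambda>x3 x4 x5 x6. \<beta> x1 x2 x3 x4 x5 x6 + \<beta> x1 x2' x3 x4 x5 x6)"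
    "\<beta> x1 x2 (x3 + x3') = (\<lambda>x4 x5 x6. \<beta> x1 x2 x3 x4 x5 x6 + \<beta> x1 x2 x3' x4 x5 x6)"
    "\<beta> x1 x2 x3 (x4 + x4') = (\<lambda>x5 x6. \<beta> x1 x2 x3 x4 x5 x6 + \<beta> x1 x2 x3 x4' x5 x6)"
    "\<beta> x1 x2 x3 x4 (x5 + x5') = (\<lambda>x6. \<beta> x1 x2 x3 x4 x5 x6 + \<beta> x1 x2 x3 x4 x5' x6)"
    "\<beta> x1 x2 x3 x4 x5 (x6 + x6') = \<beta> x1 x2 x3 x4 x5 x6 + \<beta> x1 x2 x3 x4 x5 x6'"
    "\<beta> (s1 c x1) = (\<lambda>x2 x3 x4 x5 x6. c * \<beta> x1 x2 x3 x4 x5 x6)"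
    "\<beta> x1 (s2 c x2) = (\<lambda>x3 x4 x5 x6. c * \<beta> x1 x2 x3 x4 x5 x6)"
    "\<beta> x1 x2 (s3 c x3) = (\<lambda>x4 x5 x6. c * \<beta> x1 x2 x3 x4 x5 x6)"
    "\<beta> x1 x2 x3 (s4 c x4) = (\<lambda>x5 x6. c * \<beta> x1 x2 x3 x4 x5 x6)"
    "\<beta> x1 x2 x3 x4 (s5 c x5) = (\<lambda>x6. c * \<beta> x1 x2 x3 x4 x5 x6)"
    "\<beta> x1 x2 x3 x4 x5 (s6 c x6) = c * \<beta> x1 x2 x3 x4 x5 x6"
  using assms unfolding form6_def lin_form_def linear_iff by (auto simp: fun_eq_iff)

lemma lin_sum_list: "lin s G \<Longrightarrow> G (sum_list xs) = sum_list (map G xs)"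
proof (induct xs)
  case Nil
  have "G (0 + 0) = G 0 + G 0" using Nil unfolding lin_def by blast
  then have "G 0 = 0" by (metis add.right_neutral add_cancel_right_right)
  then show ?case by simp
next
  case (Cons a xs) then show ?case unfolding lin_def by simp
qed

lemma lin_form_sweedler_sum:
  assumes "lin_form s \<phi>"
  shows "\<phi> (\<Sum>\<^sub>S L (\<lambda>u v. F u v)) = \<Sum>\<^sub>S L (\<lambda>u v. \<phi> (F u v))"
proof (rule additive_sweedler_sum)
  show "\<forall>x y. \<phi> (x + y) = \<phi> x + \<phi> y" using linD(1)[OF assms] by blast
  have "\<phi> (0 + 0) = \<phi> 0 + \<phi> 0" by (rule linD(1)[OF assms])
  then show "\<phi> 0 = 0" by (metis add.right_neutral add_cancel_right_right)
qed

lemma bil_sweedler_sum: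
  assumes "bil s1 s2 \<beta>"
  shows "\<beta> (\<Sum>\<^sub>S L (\<lambda>u v. F u v)) y = \<Sum>\<^sub>S L (\<lambda>u v. \<beta> (F u v) y)"
proof (rule additive_sweedler_sum[where G = "\<lambda>x. \<beta> x y"])
  show "\<forall>x x'. \<beta> (x + x') y = \<beta> x y + \<beta> x' y" using assms by (simp add: bil_def)
  have "\<beta> (0 + 0) y = \<beta> 0 y + \<beta> 0 y" using assms unfolding bil_def by blast
  then show "\<beta> 0 y = 0" by (metis add.right_neutral add_cancel_right_right)
qed

lemma teq2_apply: "teq2 s1 s2 xs ys \<Longrightarrow> vector_space s1 \<Longrightarrow> vector_space s2 \<Longrightarrow> bil s1 s2 \<Phi> \<Longrightarrow>
   \<Sum>\<^sub>S xs (\<lambda>u v. \<Phi> u v) = \<Sum>\<^sub>S ys (\<lambda>u v. \<Phi> u v)"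
  unfolding teq2_def by (simp add: form2_iff)

lemma teq3_apply: "teq3 s1 s2 s3 xs ys \<Longrightarrow> vector_space s1 \<Longrightarrow> vector_space s2 \<Longrightarrow> vector_space s3 \<Longrightarrow>
   tril s1 s2 s3 \<Phi> \<Longrightarrow>
   sum_list (map (\<lambda>(u,v,w). \<Phi> u v w) xs) = sum_list (map (\<lambda>(u,v,w). \<Phi> u v w) ys)"
  unfolding teq3_def by (simp add: form3_iff)

text \<open>Linear forms separate points: a nonzero vector x - y extends to a basis, on which a
  linear form can be prescribed.  This turns identities tested against all linear forms
  into equalities.\<close>

lemma linear_forms_separate:
  assumes vs: "vector_space s" and eq: "\<And>\<phi>. lin_form s \<phi> \<Longrightarrow> \<phi> x = \<phi> y"
  shows "x = y"
proof (rule ccontr)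
  assume ne: "x \<noteq> y"
  interpret vp: vector_space_pair s "(*) :: 'a \<Rightarrow> 'a \<Rightarrow> 'a"
    using vs vector_space_field by (simp add: vector_space_pair_def)
  let ?v = "x - y"
  have ind: "vp.vs1.independent {?v}" using ne by simp
  let ?\<phi> = "vp.construct {?v} (\<lambda>_. 1)"
  have lin: "Vector_Spaces.linear s (*) ?\<phi>" by (rule vp.linear_construct[OF ind])
  have v1: "?\<phi> ?v = 1" using vp.construct_basis[OF ind] by simp
  have "?\<phi> x = ?\<phi> y" using eq lin unfolding lin_form_def by blast
  moreover have "?\<phi> ?v = ?\<phi> x - ?\<phi> y"
    using lin unfolding linear_iff by (metis add_diff_cancel diff_add_cancel)
  ultimately show False using v1 by simp
qed

section \<open>Coalgebra axioms in Sweedler form\<close>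

context
  fixes C :: "('k::field, 'v::ab_group_add) bistr"
  assumes co: "coalg C"
begin

lemma vsC: "vector_space (scl C)" using co unfolding coalg_def by auto

lemma cop_add: "bil (scl C) (scl C) \<Phi> \<Longrightarrow>
  \<Sum>\<^sub>S (cop C (x + y)) (\<lambda>u v. \<Phi> u v) = \<Sum>\<^sub>S (cop C x) (\<lambda>u v. \<Phi> u v) + \<Sum>\<^sub>S (cop C y) (\<lambda>u v. \<Phi> u v)"
  using teq2_apply[of "scl C" "scl C" "cop C (x+y)" "cop C x @ cop C y" \<Phi>] co vsC
  unfolding coalg_def by auto

lemma cop_scale:
  assumes b: "bil (scl C) (scl C) \<Phi>"
  shows "\<Sum>\<^sub>S (cop C (scl C c x)) (\<lambda>u v. \<Phi> u v) = c * \<Sum>\<^sub>S (cop C x) (\<lambda>u v. \<Phi> u v)"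
proof -
  have "\<Sum>\<^sub>S (cop C (scl C c x)) (\<lambda>u v. \<Phi> u v) = \<Sum>\<^sub>S [(scl C c u, v). (u, v) \<leftarrow> cop C x] (\<lambda>u v. \<Phi> u v)"
    using teq2_apply[of "scl C" "scl C" "cop C (scl C c x)" "[(scl C c u, v). (u, v) \<leftarrow> cop C x]" \<Phi>] co vsC b
    unfolding coalg_def by blast
  also have "\<dots> = \<Sum>\<^sub>S (cop C x) (\<lambda>u v. c * \<Phi> u v)"
    using b unfolding bil_def by (simp add: map_map o_def prod.case_distrib)
  finally show ?thesis by (simp only: sweedler_sum_distrib_left)
qed

lemma coassoc_sweedler:
  assumes t: "tril (scl C) (scl C) (scl C) \<Phi>"
  shows "\<Sum>\<^sub>S (cop C x) (\<lambda>u v. \<Sum>\<^sub>S (cop C u) (\<lambda>u1 u2. \<Phi> u1 u2 v)) =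
    \<Sum>\<^sub>S (cop C x) (\<lambda>u v. \<Sum>\<^sub>S (cop C v) (\<lambda>v1 v2. \<Phi> u v1 v2))"
proof -
  have "sum_list (map (\<lambda>(u,v,w). \<Phi> u v w) (cop3 C x)) =
     sum_list (map (\<lambda>(u,v,w). \<Phi> u v w) [(u, v1, v2). (u, v) \<leftarrow> cop C x, (v1, v2) \<leftarrow> cop C v])"
    using teq3_apply[of "scl C" "scl C" "scl C" "cop3 C x"
        "[(u, v1, v2). (u, v) \<leftarrow> cop C x, (v1, v2) \<leftarrow> cop C v]" \<Phi>] co vsC t
    unfolding coalg_def by blast
  then show ?thesis unfolding cop3_def by (simp add: sum_list_concat map_concat map_map o_def prod.case_distrib)
qed

lemma counit_left:
  assumes G: "lin (scl C) G"
  shows "\<Sum>\<^sub>S (cop C x) (\<lambda>u v. cou C u * G v) = G x"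
proof -
  have "G x = G (sum_list [scl C (cou C u) v. (u, v) \<leftarrow> cop C x])" using co unfolding coalg_def by auto
  also have "\<dots> = \<Sum>\<^sub>S (cop C x) (\<lambda>u v. cou C u * G v)"
    using G by (simp add: lin_sum_list map_map o_def prod.case_distrib) (simp add: lin_def)
  finally show ?thesis by simp
qed

lemma counit_right:
  assumes G: "lin (scl C) G"
  shows "\<Sum>\<^sub>S (cop C x) (\<lambda>u v. cou C v * G u) = G x"
proof -
  have "G x = G (sum_list [scl C (cou C v) u. (u, v) \<leftarrow> cop C x])" using co unfolding coalg_def by auto
  also have "\<dots> = \<Sum>\<^sub>S (cop C x) (\<lambda>u v. cou C v * G u)"
    using G by (simp add: lin_sum_list map_map o_def prod.case_distrib) (simp add: lin_def)
  finally show ?thesis by simp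
qed

end

section \<open>Extending data with trivial right action\<close>

locale trivial_right_action =
  fixes A :: "('k::field, 'a::ab_group_add) bistr" and H :: "('k, 'h::ab_group_add) bistr"
    and ra :: "'h \<Rightarrow> 'a \<Rightarrow> 'h" and la :: "'h \<Rightarrow> 'a \<Rightarrow> 'a" and f :: "'h \<Rightarrow> 'h \<Rightarrow> 'a"
  assumes bialg_A: "bialg A" and datum: "ext_datum A H ra la f"
    and right_trivial: "\<forall>h a. ra h a = scl H (cou A a) h"
begin

lemma coA: "coalg A" using bialg_A unfolding bialg_def by auto
lemma coH: "coalg H" using datum unfolding ext_datum_def by auto
lemma algA: "alg A" using bialg_A unfolding bialg_def by auto
lemma vsA: "vector_space (scl A)" using coA unfolding coalg_def by auto
lemma vsH: "vector_space (scl H)" using coH unfolding coalg_def by auto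

lemma ra_trivial[simp]: "ra h a = scl H (cou A a) h" using right_trivial by auto

lemma mA_bil: "bilin (scl A) (scl A) (scl A) (mul A)" using algA unfolding alg_def by auto
lemma mH_bil: "bilin (scl H) (scl H) (scl H) (mul H)" using datum unfolding ext_datum_def by auto
lemma la_map: "coalg_map2 H A A la" using datum unfolding ext_datum_def by auto
lemma f_map: "coalg_map2 H H A f" using datum unfolding ext_datum_def by auto
lemma la_bil: "bilin (scl H) (scl A) (scl A) la" using la_map unfolding coalg_map2_def by auto
lemma f_bil: "bilin (scl H) (scl H) (scl A) f" using f_map unfolding coalg_map2_def by auto
lemma couA_lin: "lin_form (scl A) (cou A)" using coA unfolding coalg_def by auto
lemma couH_lin: "lin_form (scl H) (cou H)" using coH unfolding coalg_def by auto

lemmas mA_lin[simp] = bilinD[OF mA_bil]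
lemmas mH_lin[simp] = bilinD[OF mH_bil]
lemmas la_lin[simp] = bilinD[OF la_bil]
lemmas f_lin[simp] = bilinD[OF f_bil]
lemmas couA_l[simp] = linD[OF couA_lin]
lemmas couH_l[simp] = linD[OF couH_lin]

interpretation vA: vector_space "scl A" by (rule vsA)
interpretation vH: vector_space "scl H" by (rule vsH)
lemmas sA_simps[simp] = vA.scale_right_distrib vA.scale_left_distrib vA.scale_scale vA.scale_one
   vA.scale_zero_left vA.scale_zero_right
lemmas sH_simps[simp] = vH.scale_right_distrib vH.scale_left_distrib vH.scale_scale vH.scale_one
   vH.scale_zero_left vH.scale_zero_right

lemma mA_assoc[simp]: "mul A (mul A x y) z = mul A x (mul A y z)" using algA unfolding alg_def by auto
lemma mA_one[simp]: "mul A (one A) x = x" "mul A x (one A) = x" using algA unfolding alg_def by auto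
lemma mH_one[simp]: "mul H (one H) x = x" "mul H x (one H) = x" using datum unfolding ext_datum_def by auto
lemma couA_mul[simp]: "cou A (mul A x y) = cou A x * cou A y" and couA_one[simp]: "cou A (one A) = 1"
  using bialg_A unfolding bialg_def by auto
lemma couA_la[simp]: "cou A (la h a) = cou H h * cou A a" using la_map unfolding coalg_map2_def by auto
lemma couA_f[simp]: "cou A (f g h) = cou H g * cou H h" using f_map unfolding coalg_map2_def by auto
lemma la_one[simp]: "la h (one A) = scl A (cou H h) (one A)" "la (one H) a = a"
  using datum unfolding ext_datum_def by auto
lemma f_one[simp]: "f h (one H) = scl A (cou H h) (one A)" "f (one H) h = scl A (cou H h) (one A)"
  using datum unfolding ext_datum_def by auto

lemma cop_add_A[simp]: "bil (scl A) (scl A) \<Phi> \<Longrightarrow>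
  \<Sum>\<^sub>S (cop A (x + y)) (\<lambda>u v. \<Phi> u v) = \<Sum>\<^sub>S (cop A x) (\<lambda>u v. \<Phi> u v) + \<Sum>\<^sub>S (cop A y) (\<lambda>u v. \<Phi> u v)"
  by (rule cop_add[OF coA])
lemma cop_add_H[simp]: "bil (scl H) (scl H) \<Phi> \<Longrightarrow>
  \<Sum>\<^sub>S (cop H (x + y)) (\<lambda>u v. \<Phi> u v) = \<Sum>\<^sub>S (cop H x) (\<lambda>u v. \<Phi> u v) + \<Sum>\<^sub>S (cop H y) (\<lambda>u v. \<Phi> u v)"
  by (rule cop_add[OF coH])
lemma cop_scale_A[simp]: "bil (scl A) (scl A) \<Phi> \<Longrightarrow>
  \<Sum>\<^sub>S (cop A (scl A c x)) (\<lambda>u v. \<Phi> u v) = c * \<Sum>\<^sub>S (cop A x) (\<lambda>u v. \<Phi> u v)"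
  by (rule cop_scale[OF coA])
lemma cop_scale_H[simp]: "bil (scl H) (scl H) \<Phi> \<Longrightarrow>
  \<Sum>\<^sub>S (cop H (scl H c x)) (\<lambda>u v. \<Phi> u v) = c * \<Sum>\<^sub>S (cop H x) (\<lambda>u v. \<Phi> u v)"
  by (rule cop_scale[OF coH])

lemma cop_H_one[simp]:
  assumes "bil (scl H) (scl H) \<Phi>"
  shows "\<Sum>\<^sub>S (cop H (one H)) (\<lambda>u v. \<Phi> u v) = \<Phi> (one H) (one H)"
proof -
  have "teq2 (scl H) (scl H) (cop H (one H)) [(one H, one H)]" using datum unfolding ext_datum_def by blast
  then show ?thesis using teq2_apply[of "scl H" "scl H" "cop H (one H)" "[(one H, one H)]" \<Phi>] vsH assms by simp
qed

lemma cop_A_one[simp]: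
  assumes "bil (scl A) (scl A) \<Phi>"
  shows "\<Sum>\<^sub>S (cop A (one A)) (\<lambda>u v. \<Phi> u v) = \<Phi> (one A) (one A)"
proof -
  have "teq2 (scl A) (scl A) (cop A (one A)) [(one A, one A)]" using bialg_A unfolding bialg_def by blast
  then show ?thesis using teq2_apply[of "scl A" "scl A" "cop A (one A)" "[(one A, one A)]" \<Phi>] vsA assms by simp
qed

lemmas multilinear_simps = sweedler_simps bil_def tril_def lin_def ring_distribs mult_ac add_ac

text \<open>The crossed product formula: since h \<triangleleft> c = \<epsilon>(c) h, counitality of A removes the
  two extra Sweedler components of c from the product of A \<ltimes> H.\<close>
lemma smash_normal_form[simp]:
  assumes b: "bil (scl A) (scl H) \<beta>"
  shows "\<Sum>\<^sub>S (smash A H ra la f (a, h) (c, g)) (\<lambda>x y. \<beta> x y) =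
   \<Sum>\<^sub>S (cop H h) (\<lambda>hh h3. \<Sum>\<^sub>S (cop H hh) (\<lambda>h1 h2. \<Sum>\<^sub>S (cop H g) (\<lambda>g1 g2.
      \<beta> (mul A a (mul A (la h1 c) (f h2 g1))) (mul H h3 g2))))"
proof -
  note bb[simp] = bilD[OF b]
  have "\<Sum>\<^sub>S (smash A H ra la f (a, h) (c, g)) (\<lambda>x y. \<beta> x y) =
   \<Sum>\<^sub>S (cop H h) (\<lambda>hh h3. \<Sum>\<^sub>S (cop H hh) (\<lambda>h1 h2. \<Sum>\<^sub>S (cop A c) (\<lambda>cc c3. cou A c3 *
     \<Sum>\<^sub>S (cop A cc) (\<lambda>c1 c2. cou A c2 * \<Sum>\<^sub>S (cop H g) (\<lambda>g1 g2.
       \<beta> (mul A a (mul A (la h1 c1) (f h2 g1))) (mul H h3 g2))))))"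
    unfolding smash_def cop3_def by (simp add: multilinear_simps)
  also have "\<dots> = \<Sum>\<^sub>S (cop H h) (\<lambda>hh h3. \<Sum>\<^sub>S (cop H hh) (\<lambda>h1 h2. \<Sum>\<^sub>S (cop H g) (\<lambda>g1 g2.
      \<beta> (mul A a (mul A (la h1 c) (f h2 g1))) (mul H h3 g2))))"
    by (subst counit_right[OF coA], simp add: multilinear_simps)+ (rule refl)
  finally show ?thesis .
qed

lemma coassoc_A[simp]: "tril (scl A) (scl A) (scl A) \<Phi> \<Longrightarrow>
  \<Sum>\<^sub>S (cop A x) (\<lambda>u v. \<Sum>\<^sub>S (cop A u) (\<lambda>u1 u2. \<Phi> u1 u2 v)) =
  \<Sum>\<^sub>S (cop A x) (\<lambda>u v. \<Sum>\<^sub>S (cop A v) (\<lambda>v1 v2. \<Phi> u v1 v2))"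
  by (rule coassoc_sweedler[OF coA])
lemma coassoc_H[simp]: "tril (scl H) (scl H) (scl H) \<Phi> \<Longrightarrow>
  \<Sum>\<^sub>S (cop H x) (\<lambda>u v. \<Sum>\<^sub>S (cop H u) (\<lambda>u1 u2. \<Phi> u1 u2 v)) =
  \<Sum>\<^sub>S (cop H x) (\<lambda>u v. \<Sum>\<^sub>S (cop H v) (\<lambda>v1 v2. \<Phi> u v1 v2))"
  by (rule coassoc_sweedler[OF coH])

lemma mA_zero[simp]: "mul A 0 x = 0" "mul A x 0 = 0"
  using fun_cong[OF mA_lin(1)[of 0 0], of x] mA_lin(2)[of x 0 0] by auto
lemma la_zero[simp]: "la h 0 = 0" "la 0 a = 0"
  using fun_cong[OF la_lin(1)[of 0 0], of a] la_lin(2)[of h 0 0] by auto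
lemma mA_sum[simp]: "mul A (\<Sum>\<^sub>S L (\<lambda>u v. F u v)) y = \<Sum>\<^sub>S L (\<lambda>u v. mul A (F u v) y)"
  "mul A y (\<Sum>\<^sub>S L (\<lambda>u v. F u v)) = \<Sum>\<^sub>S L (\<lambda>u v. mul A y (F u v))"
  by (rule additive_sweedler_sum; simp)+
lemma la_sum[simp]: "la h (\<Sum>\<^sub>S L (\<lambda>u v. F u v)) = \<Sum>\<^sub>S L (\<lambda>u v. la h (F u v))"
  by (rule additive_sweedler_sum; simp)+

lemma cop_A_mul[simp]:
  assumes "bil (scl A) (scl A) \<Phi>"
  shows "\<Sum>\<^sub>S (cop A (mul A x y)) (\<lambda>u v. \<Phi> u v) =
    \<Sum>\<^sub>S (cop A x) (\<lambda>x1 x2. \<Sum>\<^sub>S (cop A y) (\<lambda>y1 y2. \<Phi> (mul A x1 y1) (mul A x2 y2)))"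
proof -
  have "teq2 (scl A) (scl A) (cop A (mul A x y))
      [(mul A x1 y1, mul A x2 y2). (x1, x2) \<leftarrow> cop A x, (y1, y2) \<leftarrow> cop A y]"
    using bialg_A unfolding bialg_def by blast
  then show ?thesis using teq2_apply vsA assms by (fastforce simp: sweedler_simps)
qed

lemma cop_A_la[simp]:
  assumes "bil (scl A) (scl A) \<Phi>"
  shows "\<Sum>\<^sub>S (cop A (la x y)) (\<lambda>u v. \<Phi> u v) =
    \<Sum>\<^sub>S (cop H x) (\<lambda>x1 x2. \<Sum>\<^sub>S (cop A y) (\<lambda>y1 y2. \<Phi> (la x1 y1) (la x2 y2)))"
proof -
  have "teq2 (scl A) (scl A) (cop A (la x y)) [(la x1 y1, la x2 y2). (x1, x2) \<leftarrow> cop H x, (y1, y2) \<leftarrow> cop A y]"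
    using la_map unfolding coalg_map2_def by blast
  then show ?thesis using teq2_apply vsA assms by (fastforce simp: sweedler_simps)
qed

lemma cop_A_f[simp]:
  assumes "bil (scl A) (scl A) \<Phi>"
  shows "\<Sum>\<^sub>S (cop A (f x y)) (\<lambda>u v. \<Phi> u v) =
    \<Sum>\<^sub>S (cop H x) (\<lambda>x1 x2. \<Sum>\<^sub>S (cop H y) (\<lambda>y1 y2. \<Phi> (f x1 y1) (f x2 y2)))"
proof -
  have "teq2 (scl A) (scl A) (cop A (f x y)) [(f x1 y1, f x2 y2). (x1, x2) \<leftarrow> cop H x, (y1, y2) \<leftarrow> cop H y]"
    using f_map unfolding coalg_map2_def by blast
  then show ?thesis using teq2_apply vsA assms by (fastforce simp: sweedler_simps)
qed

text \<open>The standard procedure is simplification with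
  expand_simps, which distributes all maps over the sums and brings iterated coproducts into
  coassociative position, followed (if goals remain) by simplification with contract_simps,
  which in addition removes counits and collects scalar factors.\<close>

lemmas expand_simps = multilinear_simps hoists

lemmas contract_simps = sum_list_concat map_concat map_map o_def prod.case_distrib
   sweedler_sum_add sweedler_sum_zero sweedler_sum_factor_left
   bil_def tril_def lin_def ring_distribs mult_ac add_ac hoists
   counit_left[OF coH] counit_right[OF coH] counit_left[OF coA] counit_right[OF coA]

lemma smash_crossed_product:
  "teq2 (scl A) (scl H) (smash A H ra la f (a, h) (c, g))
     [(mul A (mul A a (la h1 c)) (f h2 g1), mul H h3 g2). (h1, h2, h3) \<leftarrow> cop3 H h, (g1, g2) \<leftarrow> cop H g]"
  unfolding teq2_def
proof (intro allI impI)
  fix \<beta> assume "form2 (scl A) (scl H) \<beta>"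
  then have b: "bil (scl A) (scl H) \<beta>" using form2_iff vsA vsH by blast
  then show "\<Sum>\<^sub>S (smash A H ra la f (a, h) (c, g)) \<beta> =
      \<Sum>\<^sub>S [(mul A (mul A a (la h1 c)) (f h2 g1), mul H h3 g2). (h1, h2, h3) \<leftarrow> cop3 H h, (g1, g2) \<leftarrow> cop H g] \<beta>"
    by (simp add: smash_normal_form[OF b] cop3_def sum_list_concat map_concat map_map o_def prod.case_distrib)
qed

lemma smul_sum: "sum_list (map F (smul A H ra la f xs ys)) =
  sum_list (map (\<lambda>p. sum_list (map (\<lambda>q. sum_list (map F (smash A H ra la f p q))) ys)) xs)"
  unfolding smul_def by (simp add: sum_list_concat map_concat map_map o_def)

lemma smash_unit_right:
  assumes b: "bil (scl A) (scl H) \<beta>"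
  shows "\<Sum>\<^sub>S (smash A H ra la f p (one A, one H)) \<beta> = case_prod \<beta> p"
proof (cases p)
  case (Pair a h)
  note bilD[OF b, simp]
  show ?thesis unfolding Pair by (simp add: expand_simps, (simp add: contract_simps)?)
qed

lemma smash_unit_left:
  assumes b: "bil (scl A) (scl H) \<beta>"
  shows "\<Sum>\<^sub>S (smash A H ra la f (one A, one H) q) \<beta> = case_prod \<beta> q"
proof (cases q)
  case (Pair c g)
  note bilD[OF b, simp]
  show ?thesis unfolding Pair by (simp add: expand_simps, (simp add: contract_simps)?)
qed

lemma smul_unit:
  "teq2 (scl A) (scl H) (smul A H ra la f [(one A, one H)] xs) xs"
  "teq2 (scl A) (scl H) (smul A H ra la f xs [(one A, one H)]) xs"
  unfolding teq2_def form2_iff[OF vsA vsH]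
  by (intro allI impI; simp add: smul_sum smash_unit_left smash_unit_right)+

lemma copT_coassoc: "teq6 (scl A) (scl H) (scl A) (scl H) (scl A) (scl H)
          [(a11, h11, a12, h12, a2, h2). (a1, h1, a2, h2) \<leftarrow> copT A H xs,
               (a11, h11, a12, h12) \<leftarrow> copT A H [(a1, h1)]]
          [(a1, h1, a21, h21, a22, h22). (a1, h1, a2, h2) \<leftarrow> copT A H xs,
               (a21, h21, a22, h22) \<leftarrow> copT A H [(a2, h2)]]"
  unfolding teq6_def copT_def
  apply (intro allI impI)
  subgoal premises p for \<beta> by (simp add: expand_simps form6D[OF p])
  done

lemma copT_counit:
  "teq2 (scl A) (scl H) [(scl A (cou A a1 * cou H h1) a2, h2). (a1, h1, a2, h2) \<leftarrow> copT A H xs] xs"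
  "teq2 (scl A) (scl H) [(scl A (cou A a2 * cou H h2) a1, h1). (a1, h1, a2, h2) \<leftarrow> copT A H xs] xs"
  unfolding teq2_def copT_def form2_iff[OF vsA vsH]
   apply (intro allI impI)
  subgoal premises p for \<beta> using bilD[OF p] by (simp add: expand_simps, (simp add: contract_simps)?)
  apply (intro allI impI)
  subgoal premises p for \<beta> using bilD[OF p] by (simp add: expand_simps, (simp add: contract_simps)?)
  done

lemma copT_one: "teq4 (scl A) (scl H) (scl A) (scl H) (copT A H [(one A, one H)]) [(one A, one H, one A, one H)]"
  unfolding teq4_def copT_def
  apply (intro allI impI)
  subgoal premises p for \<beta> by (simp add: expand_simps form4D[OF p])
  done

end


section \<open>Sufficiency of the conditions\<close>

locale crossed_conditions = trivial_right_action +
  assumes bialg_H: "bialg H"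
  and twisted_module: "\<forall>g h a.
               sum_list [mul A (la g1 (la h1 a)) (f g2 h2). (g1, g2) \<leftarrow> cop H g, (h1, h2) \<leftarrow> cop H h]
             = sum_list [mul A (f g1 h1) (la (mul H g2 h2) a). (g1, g2) \<leftarrow> cop H g, (h1, h2) \<leftarrow> cop H h]"
  and cocycle: "\<forall>g h l.
               sum_list [mul A (la g1 (f h1 l1)) (f g2 (mul H h2 l2)).
                          (g1, g2) \<leftarrow> cop H g, (h1, h2) \<leftarrow> cop H h, (l1, l2) \<leftarrow> cop H l]
             = sum_list [mul A (f g1 h1) (f (mul H g2 h2) l). (g1, g2) \<leftarrow> cop H g, (h1, h2) \<leftarrow> cop H h]"
  and measuring: "\<forall>g a b. la g (mul A a b) = sum_list [mul A (la g1 a) (la g2 b). (g1, g2) \<leftarrow> cop H g]"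
  and action_swap: "\<forall>g a. teq2 (scl H) (scl A) [(g1, la g2 a). (g1, g2) \<leftarrow> cop H g]
                                        [(g2, la g1 a). (g1, g2) \<leftarrow> cop H g]"
  and cocycle_swap: "\<forall>g h. teq2 (scl H) (scl A)
                     [(mul H g1 h1, f g2 h2). (g1, g2) \<leftarrow> cop H g, (h1, h2) \<leftarrow> cop H h]
                     [(mul H g2 h2, f g1 h1). (g1, g2) \<leftarrow> cop H g, (h1, h2) \<leftarrow> cop H h]"
begin

lemma algH: "alg H" using bialg_H unfolding bialg_def by auto
lemma mH_assoc[simp]: "mul H (mul H x y) z = mul H x (mul H y z)" using algH unfolding alg_def by auto
lemma couH_mul[simp]: "cou H (mul H x y) = cou H x * cou H y" and couH_one[simp]: "cou H (one H) = 1"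
  using bialg_H unfolding bialg_def by auto

lemma cop_H_mul[simp]:
  assumes "bil (scl H) (scl H) \<Phi>"
  shows "\<Sum>\<^sub>S (cop H (mul H x y)) (\<lambda>u v. \<Phi> u v) =
    \<Sum>\<^sub>S (cop H x) (\<lambda>x1 x2. \<Sum>\<^sub>S (cop H y) (\<lambda>y1 y2. \<Phi> (mul H x1 y1) (mul H x2 y2)))"
proof -
  have "teq2 (scl H) (scl H) (cop H (mul H x y))
      [(mul H x1 y1, mul H x2 y2). (x1, x2) \<leftarrow> cop H x, (y1, y2) \<leftarrow> cop H y]"
    using bialg_H unfolding bialg_def by blast
  then show ?thesis using teq2_apply vsH assms by (fastforce simp: sweedler_simps)
qed

lemma measuring_sweedler[simp]: "la g (mul A a b) = \<Sum>\<^sub>S (cop H g) (\<lambda>g1 g2. mul A (la g1 a) (la g2 b))"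
  using measuring by simp

lemma twisted_module_sweedler:
  assumes l: "lin (scl A) \<Psi>"
  shows "\<Sum>\<^sub>S (cop H g) (\<lambda>g1 g2. \<Sum>\<^sub>S (cop H h) (\<lambda>h1 h2. \<Psi> (mul A (la g1 (la h1 a)) (f g2 h2)))) =
    \<Sum>\<^sub>S (cop H g) (\<lambda>g1 g2. \<Sum>\<^sub>S (cop H h) (\<lambda>h1 h2. \<Psi> (mul A (f g1 h1) (la (mul H g2 h2) a))))"
proof -
  have "\<Psi> (sum_list [mul A (la g1 (la h1 a)) (f g2 h2). (g1, g2) \<leftarrow> cop H g, (h1, h2) \<leftarrow> cop H h])
      = \<Psi> (sum_list [mul A (f g1 h1) (la (mul H g2 h2) a). (g1, g2) \<leftarrow> cop H g, (h1, h2) \<leftarrow> cop H h])"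
    using twisted_module by simp
  then show ?thesis using l by (simp add: lin_sum_list sweedler_simps)
qed

lemma cocycle_sweedler:
  assumes l: "lin (scl A) \<Psi>"
  shows "\<Sum>\<^sub>S (cop H g) (\<lambda>g1 g2. \<Sum>\<^sub>S (cop H h) (\<lambda>h1 h2. \<Sum>\<^sub>S (cop H l) (\<lambda>l1 l2.
      \<Psi> (mul A (la g1 (f h1 l1)) (f g2 (mul H h2 l2)))))) =
    \<Sum>\<^sub>S (cop H g) (\<lambda>g1 g2. \<Sum>\<^sub>S (cop H h) (\<lambda>h1 h2. \<Psi> (mul A (f g1 h1) (f (mul H g2 h2) l))))"
proof -
  have "\<Psi> (sum_list [mul A (la g1 (f h1 l1)) (f g2 (mul H h2 l2)).
                       (g1, g2) \<leftarrow> cop H g, (h1, h2) \<leftarrow> cop H h, (l1, l2) \<leftarrow> cop H l])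
      = \<Psi> (sum_list [mul A (f g1 h1) (f (mul H g2 h2) l). (g1, g2) \<leftarrow> cop H g, (h1, h2) \<leftarrow> cop H h])"
    using cocycle by simp
  then show ?thesis using l by (simp add: lin_sum_list sweedler_simps)
qed

lemma action_swap_sweedler:
  "bil (scl H) (scl A) \<Phi> \<Longrightarrow>
   \<Sum>\<^sub>S (cop H g) (\<lambda>u v. \<Phi> u (la v a)) = \<Sum>\<^sub>S (cop H g) (\<lambda>u v. \<Phi> v (la u a))"
  using teq2_apply[OF action_swap[rule_format, where g=g and a=a] vsH vsA] by (simp add: sweedler_simps)

lemma cocycle_swap_sweedler:
  "bil (scl H) (scl A) \<Phi> \<Longrightarrow>
   \<Sum>\<^sub>S (cop H g) (\<lambda>g1 g2. \<Sum>\<^sub>S (cop H h) (\<lambda>h1 h2. \<Phi> (mul H g1 h1) (f g2 h2))) =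
   \<Sum>\<^sub>S (cop H g) (\<lambda>g1 g2. \<Sum>\<^sub>S (cop H h) (\<lambda>h1 h2. \<Phi> (mul H g2 h2) (f g1 h1)))"
  using teq2_apply[OF cocycle_swap[rule_format, where g=g and h=h] vsH vsA] by (simp add: sweedler_simps)

text \<open>After expansion, the twisted module condition turns
  f(m(1), n(1)) ((m(2) n(2)) \<triangleright> c) back into m(1) \<triangleright> (n(1) \<triangleright> c) f(m(2), n(2)), and the
  cocycle condition does the same for a product of two cocycles; both sides then have the
  same normal form.\<close>
lemma smash_assoc:
  assumes b: "bil (scl A) (scl H) \<beta>"
  shows "\<Sum>\<^sub>S (smash A H ra la f (a, h) (b, g)) (\<lambda>x y. \<Sum>\<^sub>S (smash A H ra la f (x, y) (c, l)) \<beta>)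
   = \<Sum>\<^sub>S (smash A H ra la f (b, g) (c, l)) (\<lambda>x y. \<Sum>\<^sub>S (smash A H ra la f (a, h) (x, y)) \<beta>)"
    (is "?lhs = ?rhs")
proof -
  note bilD[OF b, simp] bil_sweedler_sum[OF b, simp]
  have "?lhs = \<Sum>\<^sub>S (cop H h) (\<lambda>h1 r1. \<Sum>\<^sub>S (cop H r1) (\<lambda>M r2. \<Sum>\<^sub>S (cop H r2) (\<lambda>h4 h5.
      \<Sum>\<^sub>S (cop H g) (\<lambda>N s1. \<Sum>\<^sub>S (cop H s1) (\<lambda>g3 g4. \<Sum>\<^sub>S (cop H l) (\<lambda>l1 l2.
      \<Sum>\<^sub>S (cop H M) (\<lambda>m1 m2. \<Sum>\<^sub>S (cop H N) (\<lambda>n1 n2.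
        \<beta> (mul A a (mul A (la h1 b) (mul A (mul A (f m1 n1) (la (mul H m2 n2) c)) (f (mul H h4 g3) l1)))) (mul H h5 (mul H g4 l2))))))))))"
    by (simp add: expand_simps, (simp add: contract_simps)?)
  also have "\<dots> = \<Sum>\<^sub>S (cop H h) (\<lambda>h1 r1. \<Sum>\<^sub>S (cop H r1) (\<lambda>h2 r2. \<Sum>\<^sub>S (cop H r2) (\<lambda>M h5.
      \<Sum>\<^sub>S (cop H g) (\<lambda>g1 s1. \<Sum>\<^sub>S (cop H s1) (\<lambda>N g4. \<Sum>\<^sub>S (cop H l) (\<lambda>L l2.
      \<Sum>\<^sub>S (cop H M) (\<lambda>m1 m2. \<Sum>\<^sub>S (cop H N) (\<lambda>n1 n2.
        \<beta> (mul A a (mul A (la h1 b) (mul A (la h2 (la g1 c)) (mul A (f m1 n1) (f (mul H m2 n2) L))))) (mul H h5 (mul H g4 l2))))))))))"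
  proof -
    have \<Psi>: "lin (scl A) (\<lambda>z. \<beta> (mul A a (mul A (la h1 b) (mul A z (f (mul H h4 g3) l1))))
        (mul H h5 (mul H g4 l2)))" for h1 h4 g3 l1 h5 g4 l2
      by (simp add: lin_def)
    show ?thesis
      by (simp only: twisted_module_sweedler[OF \<Psi>, symmetric]) (simp add: expand_simps, (simp add: contract_simps)?)
  qed
  also have "\<dots> = ?rhs"
  proof -
    have \<Psi>: "lin (scl A) (\<lambda>z. \<beta> (mul A a (mul A (la h1 b) (mul A (la h2 (la g1 c)) z)))
        (mul H h5 (mul H g4 l2)))" for h1 h2 g1 h5 g4 l2
      by (simp add: lin_def)
    show ?thesis
      apply (simp only: cocycle_sweedler[OF \<Psi>, symmetric])
      apply (simp add: expand_simps)
      apply (simp add: contract_simps)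
      apply (simp only: sweedler_sum_swap[where N="cop H h"])
      apply (simp add: expand_simps)
      done
  qed
  finally show ?thesis .
qed

text \<open>Expanding \<Delta>((a \<ltimes> h)(c \<ltimes> g)) and \<Delta>(a \<ltimes> h) \<Delta>(c \<ltimes> g)
  gives two nested Sweedler sums which differ by the order of Sweedler components of h and g
  entering \<triangleright>, f and the product of H; the swap conditions (c) and (d) reorder them.  The two
  lemmas below transform both sides into a common intermediate form.\<close>

lemma smash_comult_left:
  assumes b: "form4 (scl A) (scl H) (scl A) (scl H) \<beta>"
  shows "\<Sum>\<^sub>S (smash A H ra la f (a, h) (c, g))
      (\<lambda>x y. \<Sum>\<^sub>S (cop A x) (\<lambda>x1 x2. \<Sum>\<^sub>S (cop H y) (\<lambda>y1 y2. \<beta> x1 y1 x2 y2)))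
    = \<Sum>\<^sub>S (cop H h) (\<lambda>h1 rh0. \<Sum>\<^sub>S (cop H rh0) (\<lambda>h2 rh1. \<Sum>\<^sub>S (cop H rh1) (\<lambda>h3 rh2.
      \<Sum>\<^sub>S (cop H rh2) (\<lambda>M h6. \<Sum>\<^sub>S (cop H g) (\<lambda>g1 rg0. \<Sum>\<^sub>S (cop H rg0) (\<lambda>g2 rg1.
      \<Sum>\<^sub>S (cop H rg1) (\<lambda>g3 g4. \<Sum>\<^sub>S (cop A a) (\<lambda>a1 a2. \<Sum>\<^sub>S (cop A c) (\<lambda>c1 c2.
      \<Sum>\<^sub>S (cop H M) (\<lambda>m1 m2.
        \<beta> (mul A a1 (mul A (la h1 c1) (f h2 g1))) (mul H m2 g3) (mul A a2 (mul A (la m1 c2) (f h3 g2))) (mul H h6 g4)))))))))))"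
    (is "?lhs = ?normal_form")
proof -
  note form4D[OF b, simp]
  have "?lhs = \<Sum>\<^sub>S (cop H h) (\<lambda>h1 rh0. \<Sum>\<^sub>S (cop H rh0) (\<lambda>M rh1. \<Sum>\<^sub>S (cop H rh1) (\<lambda>h4 rh2.
      \<Sum>\<^sub>S (cop H rh2) (\<lambda>h5 h6. \<Sum>\<^sub>S (cop H g) (\<lambda>g1 rg0. \<Sum>\<^sub>S (cop H rg0) (\<lambda>g2 rg1.
      \<Sum>\<^sub>S (cop H rg1) (\<lambda>g3 g4. \<Sum>\<^sub>S (cop A a) (\<lambda>a1 a2. \<Sum>\<^sub>S (cop A c) (\<lambda>c1 c2.
      \<Sum>\<^sub>S (cop H M) (\<lambda>m1 m2.
        \<beta> (mul A a1 (mul A (la h1 c1) (f m2 g1))) (mul H h5 g3) (mul A a2 (mul A (la m1 c2) (f h4 g2))) (mul H h6 g4)))))))))))"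
    by (simp add: expand_simps, (simp add: contract_simps)?)
  also have "\<dots> = \<Sum>\<^sub>S (cop H h) (\<lambda>h1 rh0. \<Sum>\<^sub>S (cop H rh0) (\<lambda>h2 rh1. \<Sum>\<^sub>S (cop H rh1) (\<lambda>M rh2.
      \<Sum>\<^sub>S (cop H rh2) (\<lambda>h5 h6. \<Sum>\<^sub>S (cop H g) (\<lambda>g1 rg0. \<Sum>\<^sub>S (cop H rg0) (\<lambda>g2 rg1.
      \<Sum>\<^sub>S (cop H rg1) (\<lambda>g3 g4. \<Sum>\<^sub>S (cop A a) (\<lambda>a1 a2. \<Sum>\<^sub>S (cop A c) (\<lambda>c1 c2.
      \<Sum>\<^sub>S (cop H M) (\<lambda>m1 m2.
        \<beta> (mul A a1 (mul A (la h1 c1) (f h2 g1))) (mul H h5 g3) (mul A a2 (mul A (la m1 c2) (f m2 g2))) (mul H h6 g4)))))))))))"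
  proof -
    have \<Phi>: "bil (scl H) (scl A) (\<lambda>x y.
        \<beta> (mul A a1 (mul A (la h1 c1) (f x g1))) (mul H h5 g3) (mul A a2 (mul A y (f h4 g2))) (mul H h6 g4))"
      for a1 h1 c1 g1 h5 g3 a2 h4 g2 h6 g4
      by (simp add: expand_simps)
    show ?thesis by (simp only: action_swap_sweedler[OF \<Phi>, symmetric]) (simp add: expand_simps, (simp add: contract_simps)?)
  qed
  also have "\<dots> = ?normal_form"
  proof -
    have \<Phi>: "bil (scl H) (scl A) (\<lambda>x y.
        \<beta> (mul A a1 (mul A (la h1 c1) (f h2 g1))) (mul H h5 g3) (mul A a2 (mul A y (f x g2))) (mul H h6 g4))"
      for a1 h1 c1 h2 g1 h5 g3 a2 g2 h6 g4
      by (simp add: expand_simps)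
    show ?thesis by (simp only: action_swap_sweedler[OF \<Phi>, symmetric]) (simp add: expand_simps, (simp add: contract_simps)?)
  qed
  finally show ?thesis .
qed

lemma smash_comult_right:
  assumes b: "form4 (scl A) (scl H) (scl A) (scl H) \<beta>"
  shows "\<Sum>\<^sub>S (cop H h) (\<lambda>h1 rh0. \<Sum>\<^sub>S (cop H rh0) (\<lambda>h2 rh1. \<Sum>\<^sub>S (cop H rh1) (\<lambda>h3 rh2.
    \<Sum>\<^sub>S (cop H rh2) (\<lambda>M h6. \<Sum>\<^sub>S (cop H g) (\<lambda>g1 rg0. \<Sum>\<^sub>S (cop H rg0) (\<lambda>g2 rg1.
    \<Sum>\<^sub>S (cop H rg1) (\<lambda>g3 g4. \<Sum>\<^sub>S (cop A a) (\<lambda>a1 a2. \<Sum>\<^sub>S (cop A c) (\<lambda>c1 c2.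
    \<Sum>\<^sub>S (cop H M) (\<lambda>m1 m2.
      \<beta> (mul A a1 (mul A (la h1 c1) (f h2 g1))) (mul H m2 g3) (mul A a2 (mul A (la m1 c2) (f h3 g2))) (mul H h6 g4)))))))))))
    = \<Sum>\<^sub>S (cop A a) (\<lambda>a1 a2. \<Sum>\<^sub>S (cop H h) (\<lambda>h1 h2. \<Sum>\<^sub>S (cop A c) (\<lambda>c1 c2. \<Sum>\<^sub>S (cop H g) (\<lambda>g1 g2.
        \<Sum>\<^sub>S (smash A H ra la f (a1, h1) (c1, g1)) (\<lambda>x y.
          \<Sum>\<^sub>S (smash A H ra la f (a2, h2) (c2, g2)) (\<lambda>x' y'. \<beta> x y x' y'))))))"
    (is "?normal_form = ?rhs")
proof -
  note form4D[OF b, simp]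
  have "?normal_form = \<Sum>\<^sub>S (cop H h) (\<lambda>h1 rh0. \<Sum>\<^sub>S (cop H rh0) (\<lambda>h2 rh1. \<Sum>\<^sub>S (cop H rh1) (\<lambda>M rh2.
      \<Sum>\<^sub>S (cop H rh2) (\<lambda>h5 h6. \<Sum>\<^sub>S (cop H g) (\<lambda>g1 rg0. \<Sum>\<^sub>S (cop H rg0) (\<lambda>N g4.
      \<Sum>\<^sub>S (cop A a) (\<lambda>a1 a2. \<Sum>\<^sub>S (cop A c) (\<lambda>c1 c2. \<Sum>\<^sub>S (cop H M) (\<lambda>m1 m2.
      \<Sum>\<^sub>S (cop H N) (\<lambda>n1 n2.
        \<beta> (mul A a1 (mul A (la h1 c1) (f h2 g1))) (mul H m2 n2) (mul A a2 (mul A (la h5 c2) (f m1 n1))) (mul H h6 g4)))))))))))"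
  proof -
    have \<Phi>: "bil (scl H) (scl A) (\<lambda>x y.
        \<beta> (mul A a1 (mul A (la h1 c1) (f h2 g1))) (mul H x g3) (mul A a2 (mul A y (f h3 g2))) (mul H h6 g4))"
      for a1 h1 c1 h2 g1 g3 a2 h3 g2 h6 g4
      by (simp add: expand_simps)
    show ?thesis by (simp only: action_swap_sweedler[OF \<Phi>, symmetric]) (simp add: expand_simps, (simp add: contract_simps)?)
  qed
  also have "\<dots> = \<Sum>\<^sub>S (cop H h) (\<lambda>h1 rh0. \<Sum>\<^sub>S (cop H rh0) (\<lambda>h2 rh1. \<Sum>\<^sub>S (cop H rh1) (\<lambda>h3 rh2.
      \<Sum>\<^sub>S (cop H rh2) (\<lambda>M h6. \<Sum>\<^sub>S (cop H g) (\<lambda>g1 rg0. \<Sum>\<^sub>S (cop H rg0) (\<lambda>g2 rg1.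
      \<Sum>\<^sub>S (cop H rg1) (\<lambda>g3 g4. \<Sum>\<^sub>S (cop A a) (\<lambda>a1 a2. \<Sum>\<^sub>S (cop A c) (\<lambda>c1 c2.
      \<Sum>\<^sub>S (cop H M) (\<lambda>m1 m2.
        \<beta> (mul A a1 (mul A (la h1 c1) (f h2 g1))) (mul H h3 g2) (mul A a2 (mul A (la m2 c2) (f m1 g3))) (mul H h6 g4)))))))))))"
  proof -
    have \<Phi>: "bil (scl H) (scl A) (\<lambda>x y.
        \<beta> (mul A a1 (mul A (la h1 c1) (f h2 g1))) x (mul A a2 (mul A (la h5 c2) y)) (mul H h6 g4))"
      for a1 h1 c1 h2 g1 a2 h5 c2 h6 g4
      by (simp add: expand_simps)
    show ?thesis by (simp only: cocycle_swap_sweedler[OF \<Phi>, symmetric]) (simp add: expand_simps, (simp add: contract_simps)?)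
  qed
  also have "\<dots> = ?rhs"
  proof -
    have \<Phi>: "bil (scl H) (scl A) (\<lambda>x y.
        \<beta> (mul A a1 (mul A (la h1 c1) (f h2 g1))) (mul H h3 g2) (mul A a2 (mul A y (f x g3))) (mul H h6 g4))"
      for a1 h1 c1 h2 g1 h3 g2 a2 g3 h6 g4
      by (simp add: expand_simps)
    show ?thesis
      apply (simp only: action_swap_sweedler[OF \<Phi>])
      apply (simp add: expand_simps)
      apply (simp only: sweedler_sum_swap[where N="cop A c"])
      apply (simp only: sweedler_sum_swap[where N="cop A a"])
      done
  qed
  finally show ?thesis .
qed

lemma smash_comult:
  assumes b: "form4 (scl A) (scl H) (scl A) (scl H) \<beta>"
  shows "\<Sum>\<^sub>S (smash A H ra la f p q) (\<lambda>x y. \<Sum>\<^sub>S (cop A x) (\<lambda>x1 x2. \<Sum>\<^sub>S (cop H y) (\<lambda>y1 y2. \<beta> x1 y1 x2 y2)))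
   = (case p of (a, h) \<Rightarrow> case q of (c, g) \<Rightarrow>
      \<Sum>\<^sub>S (cop A a) (\<lambda>a1 a2. \<Sum>\<^sub>S (cop H h) (\<lambda>h1 h2. \<Sum>\<^sub>S (cop A c) (\<lambda>c1 c2. \<Sum>\<^sub>S (cop H g) (\<lambda>g1 g2.
        \<Sum>\<^sub>S (smash A H ra la f (a1, h1) (c1, g1)) (\<lambda>x y.
          \<Sum>\<^sub>S (smash A H ra la f (a2, h2) (c2, g2)) (\<lambda>x' y'. \<beta> x y x' y')))))))"
  by (cases p; cases q) (simp only: prod.case smash_comult_left[OF b] smash_comult_right[OF b])

lemma smul_comult: "teq4 (scl A) (scl H) (scl A) (scl H)
    (copT A H (smul A H ra la f xs ys)) (prodT A H ra la f (copT A H xs) (copT A H ys))"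
  unfolding teq4_def
  apply (intro allI impI)
  subgoal premises p for \<beta>
    apply (simp only: copT_def prodT_def sweedler_simps smul_sum prod.case)
    apply (simp only: smash_comult[OF p])
    apply (rule sum_list_map_cong)
    subgoal for x
      apply (cases x)
      subgoal for a h
        apply (simp only: prod.case)
        apply (simp only: sweedler_sum_swap[where N="cop H h"])
        apply (simp only: sweedler_sum_swap[where N="cop A a"])
        done
      done
    done
  done

lemma smul_assoc: "teq2 (scl A) (scl H)
    (smul A H ra la f (smul A H ra la f xs ys) zs) (smul A H ra la f xs (smul A H ra la f ys zs))"
  unfolding teq2_def
proof (intro allI impI)
  fix \<beta> assume "form2 (scl A) (scl H) \<beta>"
  then have b: "bil (scl A) (scl H) \<beta>" using form2_iff vsA vsH by blast
  have assoc: "sum_list (map (\<lambda>t. \<Sum>\<^sub>S (smash A H ra la f t r) \<beta>) (smash A H ra la f p q)) =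
      sum_list (map (\<lambda>t. \<Sum>\<^sub>S (smash A H ra la f p t) \<beta>) (smash A H ra la f q r))" for p q r
    using smash_assoc[OF b] by (cases p; cases q; cases r) (simp add: split_beta')
  show "\<Sum>\<^sub>S (smul A H ra la f (smul A H ra la f xs ys) zs) \<beta> =
        \<Sum>\<^sub>S (smul A H ra la f xs (smul A H ra la f ys zs)) \<beta>"
    unfolding smul_sum
    apply (rule sum_list_map_cong, rule sum_list_map_cong)
    apply (subst sum_list_map_swap)
    apply (rule sum_list_map_cong)
    apply (rule assoc)
    done
qed

text \<open>The counit of A \<ltimes> H is multiplicative because \<epsilon> is multiplicative on A and H and
  \<triangleright>, f are coalgebra maps.\<close>
lemma smash_counit: "\<Sum>\<^sub>S (smash A H ra la f (a, h) (c, g)) (\<lambda>x y. cou A x * cou H y)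
   = (cou A a * cou H h) * (cou A c * cou H g)"
proof -
  have b: "bil (scl A) (scl H) (\<lambda>x y. cou A x * cou H y)" by (simp add: bil_def algebra_simps)
  show ?thesis by (simp add: expand_simps smash_normal_form[OF b], (simp add: contract_simps)?)
qed

lemma smul_counit: "couT A H (smul A H ra la f xs ys) = couT A H xs * couT A H ys"
  unfolding couT_def
  apply (simp only: smul_sum sum_list_map_mult)
  apply (rule sum_list_map_cong, rule sum_list_map_cong)
  subgoal for p q by (cases p; cases q) (simp only: prod.case smash_counit)
  done

theorem bialg_ext_of_conditions: "bialg_ext A H ra la f"
  unfolding bialg_ext_def Let_def
  by (intro conjI allI smul_assoc smul_unit copT_coassoc copT_counit smul_comult copT_one smul_counit)
    (simp add: couT_def)

end

section \<open>Necessity of the conditions\<close>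

locale trivial_bialg_ext = trivial_right_action +
  assumes bialg_ext_holds: "bialg_ext A H ra la f"
begin

lemma ext_assoc: "teq2 (scl A) (scl H)
    (smul A H ra la f (smul A H ra la f xs ys) zs) (smul A H ra la f xs (smul A H ra la f ys zs))"
  using bialg_ext_holds unfolding bialg_ext_def Let_def by blast
lemma ext_comult: "teq4 (scl A) (scl H) (scl A) (scl H)
    (copT A H (smul A H ra la f xs ys)) (prodT A H ra la f (copT A H xs) (copT A H ys))"
  using bialg_ext_holds unfolding bialg_ext_def Let_def by blast
lemma ext_counit_mult: "couT A H (smul A H ra la f xs ys) = couT A H xs * couT A H ys"
  using bialg_ext_holds unfolding bialg_ext_def Let_def by blast
lemma ext_counit_one: "couT A H [(one A, one H)] = 1"
  using bialg_ext_holds unfolding bialg_ext_def Let_def by blast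

lemma ext_assoc_simple: "bil (scl A) (scl H) \<beta> \<Longrightarrow>
  \<Sum>\<^sub>S (smul A H ra la f (smul A H ra la f [p] [q]) [r]) \<beta> =
  \<Sum>\<^sub>S (smul A H ra la f [p] (smul A H ra la f [q] [r])) \<beta>"
  using ext_assoc[of "[p]" "[q]" "[r]"] unfolding teq2_def by (simp add: form2_iff[OF vsA vsH])

lemma ext_comult_simple: "form4 (scl A) (scl H) (scl A) (scl H) \<beta> \<Longrightarrow>
  sum_list (map (\<lambda>(x1,x2,x3,x4). \<beta> x1 x2 x3 x4) (copT A H (smul A H ra la f [p] [q]))) =
  sum_list (map (\<lambda>(x1,x2,x3,x4). \<beta> x1 x2 x3 x4) (prodT A H ra la f (copT A H [p]) (copT A H [q])))"
  using ext_comult[of "[p]" "[q]"] unfolding teq4_def by blast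

text \<open>H is a bialgebra: restrict the structure of A \<ltimes> H to 1 \<ltimes> H and apply the counit of A.\<close>

lemma couH_one[simp]: "cou H (one H) = 1"
  using ext_counit_one by (simp add: couT_def)

lemma couH_mul[simp]: "cou H (mul H g h) = cou H g * cou H h"
proof -
  have b: "bil (scl A) (scl H) (\<lambda>x y. cou A x * cou H y)" by (simp add: bil_def algebra_simps)
  have "couT A H (smul A H ra la f [(one A, g)] [(one A, h)]) = cou H (mul H g h)"
    unfolding couT_def smul_def by (simp add: expand_simps smash_normal_form[OF b], (simp add: contract_simps)?)
  then show ?thesis using ext_counit_mult[of "[(one A, g)]" "[(one A, h)]"] by (simp add: couT_def)
qed

lemma smash_normal_form_pairs[simp]: "bil (scl A) (scl H) \<beta> \<Longrightarrow>
  \<Sum>\<^sub>S (smash A H ra la f p q) (\<lambda>x y. \<beta> x y) = (case p of (a, h) \<Rightarrow> case q of (c, g) \<Rightarrow>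
   \<Sum>\<^sub>S (cop H h) (\<lambda>hh h3. \<Sum>\<^sub>S (cop H hh) (\<lambda>h1 h2. \<Sum>\<^sub>S (cop H g) (\<lambda>g1 g2.
     \<beta> (mul A a (mul A (la h1 c) (f h2 g1))) (mul H h3 g2)))))"
  by (cases p; cases q) (simp only: prod.case smash_normal_form)

lemma mH_assoc: "mul H (mul H g h) l = mul H g (mul H h l)" (is "?lhs = ?rhs")
proof (rule linear_forms_separate[OF vsH])
  fix \<phi> assume p: "lin_form (scl H) \<phi>"
  note linD[OF p, simp]
  have b: "bil (scl A) (scl H) (\<lambda>x y. cou A x * \<phi> y)" by (simp add: bil_def algebra_simps)
  have left_bracketing: "\<Sum>\<^sub>S (smul A H ra la f (smul A H ra la f [(one A, g)] [(one A, h)]) [(one A, l)])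
      (\<lambda>x y. cou A x * \<phi> y) = \<phi> ?lhs"
    unfolding smul_def by (simp add: expand_simps, (simp add: contract_simps)?)
  have right_bracketing: "\<Sum>\<^sub>S (smul A H ra la f [(one A, g)] (smul A H ra la f [(one A, h)] [(one A, l)]))
      (\<lambda>x y. cou A x * \<phi> y) = \<phi> ?rhs"
    unfolding smul_def by (simp add: expand_simps, (simp add: contract_simps)?)
  show "\<phi> ?lhs = \<phi> ?rhs" using left_bracketing right_bracketing ext_assoc_simple[OF b] by simp
qed

lemma H_comult_mult: "teq2 (scl H) (scl H) (cop H (mul H x y))
    [(mul H x1 y1, mul H x2 y2). (x1, x2) \<leftarrow> cop H x, (y1, y2) \<leftarrow> cop H y]" (is "teq2 _ _ ?L ?R")
  unfolding teq2_def
proof (intro allI impI)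
  fix \<beta> assume "form2 (scl H) (scl H) \<beta>"
  then have b: "bil (scl H) (scl H) \<beta>" using form2_iff vsH by blast
  note bilD[OF b, simp]
  have f4: "form4 (scl A) (scl H) (scl A) (scl H) (\<lambda>x1 y1 x2 y2. cou A x1 * \<beta> y1 y2 * cou A x2)"
    by (rule form4I[OF vsA vsH vsA vsH]) (simp_all add: algebra_simps)
  have comult_of_product: "sum_list (map (\<lambda>(x1,x2,x3,x4). cou A x1 * \<beta> x2 x4 * cou A x3)
      (copT A H (smul A H ra la f [(one A, x)] [(one A, y)]))) = \<Sum>\<^sub>S ?L \<beta>"
    unfolding smul_def copT_def by (simp add: expand_simps, (simp add: contract_simps)?)
  have product_of_comults: "sum_list (map (\<lambda>(x1,x2,x3,x4). cou A x1 * \<beta> x2 x4 * cou A x3)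
      (prodT A H ra la f (copT A H [(one A, x)]) (copT A H [(one A, y)]))) = \<Sum>\<^sub>S ?R \<beta>"
    unfolding prodT_def copT_def by (simp add: expand_simps, (simp add: contract_simps)?)
  show "\<Sum>\<^sub>S ?L \<beta> = \<Sum>\<^sub>S ?R \<beta>"
    using comult_of_product product_of_comults ext_comult_simple[OF f4, of "(one A, x)" "(one A, y)"] by simp
qed

lemma H_bialg: "bialg H"
  unfolding bialg_def alg_def
  using vsH mH_bil mH_one mH_assoc coH H_comult_mult couH_mul couH_one datum
  unfolding ext_datum_def by blast

text \<open>Conditions (a) and (b): associativity on (1 \<ltimes> g)(x \<ltimes> 1)(y \<ltimes> 1), read in A via
  \<phi> \<otimes> \<epsilon> for every linear form \<phi> on A.\<close>

lemma measuring_necessary: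
  "la g (mul A a b) = sum_list [mul A (la g1 a) (la g2 b). (g1, g2) \<leftarrow> cop H g]" (is "?lhs = ?rhs")
proof (rule linear_forms_separate[OF vsA])
  fix \<phi> assume p: "lin_form (scl A) \<phi>"
  note linD[OF p, simp] lin_form_sweedler_sum[OF p, simp]
  have b: "bil (scl A) (scl H) (\<lambda>x y. \<phi> x * cou H y)" by (simp add: bil_def algebra_simps)
  have left_bracketing: "\<Sum>\<^sub>S (smul A H ra la f (smul A H ra la f [(one A, g)] [(a, one H)]) [(b, one H)])
      (\<lambda>x y. \<phi> x * cou H y) = \<phi> ?rhs"
    unfolding smul_def by (simp add: expand_simps, (simp add: contract_simps)?)
  have right_bracketing: "\<Sum>\<^sub>S (smul A H ra la f [(one A, g)] (smul A H ra la f [(a, one H)] [(b, one H)]))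
      (\<lambda>x y. \<phi> x * cou H y) = \<phi> ?lhs"
    unfolding smul_def by (simp add: expand_simps, (simp add: contract_simps)?)
  show "\<phi> ?lhs = \<phi> ?rhs" using left_bracketing right_bracketing ext_assoc_simple[OF b] by simp
qed

lemma twisted_module_necessary:
  "sum_list [mul A (la g1 (la h1 a)) (f g2 h2). (g1, g2) \<leftarrow> cop H g, (h1, h2) \<leftarrow> cop H h]
 = sum_list [mul A (f g1 h1) (la (mul H g2 h2) a). (g1, g2) \<leftarrow> cop H g, (h1, h2) \<leftarrow> cop H h]"
  (is "?lhs = ?rhs")
proof (rule linear_forms_separate[OF vsA])
  fix \<phi> assume p: "lin_form (scl A) \<phi>"
  note linD[OF p, simp] lin_form_sweedler_sum[OF p, simp]
  have b: "bil (scl A) (scl H) (\<lambda>x y. \<phi> x * cou H y)" by (simp add: bil_def algebra_simps)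
  have left_bracketing: "\<Sum>\<^sub>S (smul A H ra la f (smul A H ra la f [(one A, g)] [(one A, h)]) [(a, one H)])
      (\<lambda>x y. \<phi> x * cou H y) = \<phi> ?rhs"
    unfolding smul_def by (simp add: expand_simps, (simp add: contract_simps)?)
  have right_bracketing: "\<Sum>\<^sub>S (smul A H ra la f [(one A, g)] (smul A H ra la f [(one A, h)] [(a, one H)]))
      (\<lambda>x y. \<phi> x * cou H y) = \<phi> ?lhs"
    unfolding smul_def
    apply (simp add: expand_simps)
    apply ((simp add: contract_simps)?)
    apply (simp only: sweedler_sum_swap[where N="cop H g"])
    done
  show "\<phi> ?lhs = \<phi> ?rhs" using left_bracketing right_bracketing ext_assoc_simple[OF b] by simp
qed

lemma cocycle_necessary:
  "sum_list [mul A (la g1 (f h1 l1)) (f g2 (mul H h2 l2)).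
     (g1, g2) \<leftarrow> cop H g, (h1, h2) \<leftarrow> cop H h, (l1, l2) \<leftarrow> cop H l]
 = sum_list [mul A (f g1 h1) (f (mul H g2 h2) l). (g1, g2) \<leftarrow> cop H g, (h1, h2) \<leftarrow> cop H h]"
  (is "?lhs = ?rhs")
proof (rule linear_forms_separate[OF vsA])
  fix \<phi> assume p: "lin_form (scl A) \<phi>"
  note linD[OF p, simp] lin_form_sweedler_sum[OF p, simp]
  have b: "bil (scl A) (scl H) (\<lambda>x y. \<phi> x * cou H y)" by (simp add: bil_def algebra_simps)
  have left_bracketing: "\<Sum>\<^sub>S (smul A H ra la f (smul A H ra la f [(one A, g)] [(one A, h)]) [(one A, l)])
      (\<lambda>x y. \<phi> x * cou H y) = \<phi> ?rhs"
    unfolding smul_def by (simp add: expand_simps, (simp add: contract_simps)?)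
  have right_bracketing: "\<Sum>\<^sub>S (smul A H ra la f [(one A, g)] (smul A H ra la f [(one A, h)] [(one A, l)]))
      (\<lambda>x y. \<phi> x * cou H y) = \<phi> ?lhs"
    unfolding smul_def
    apply (simp add: expand_simps)
    apply ((simp add: contract_simps)?)
    apply (simp only: sweedler_sum_swap[where N="cop H g"])
    done
  show "\<phi> ?lhs = \<phi> ?rhs" using left_bracketing right_bracketing ext_assoc_simple[OF b] by simp
qed

text \<open>Conditions (c) and (d): comultiplicativity on (1 \<ltimes> g)(x \<ltimes> y), read in H \<otimes> A
  via \<epsilon> \<otimes> \<beta> \<otimes> \<epsilon> for every bilinear form \<beta> on H \<times> A.\<close>

lemma action_swap_necessary: "teq2 (scl H) (scl A)
    [(g1, la g2 a). (g1, g2) \<leftarrow> cop H g] [(g2, la g1 a). (g1, g2) \<leftarrow> cop H g]" (is "teq2 _ _ ?L ?R")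
  unfolding teq2_def
proof (intro allI impI)
  fix \<beta> assume "form2 (scl H) (scl A) \<beta>"
  then have b: "bil (scl H) (scl A) \<beta>" using form2_iff vsH vsA by blast
  note bilD[OF b, simp]
  have f4: "form4 (scl A) (scl H) (scl A) (scl H) (\<lambda>x1 y1 x2 y2. cou A x1 * \<beta> y1 x2 * cou H y2)"
    by (rule form4I[OF vsA vsH vsA vsH]) (simp_all add: algebra_simps)
  have comult_of_product: "sum_list (map (\<lambda>(x1,x2,x3,x4). cou A x1 * \<beta> x2 x3 * cou H x4)
      (copT A H (smul A H ra la f [(one A, g)] [(a, one H)]))) = \<Sum>\<^sub>S ?R \<beta>"
    unfolding smul_def copT_def by (simp add: expand_simps, (simp add: contract_simps)?)
  have product_of_comults: "sum_list (map (\<lambda>(x1,x2,x3,x4). cou A x1 * \<beta> x2 x3 * cou H x4)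
      (prodT A H ra la f (copT A H [(one A, g)]) (copT A H [(a, one H)]))) = \<Sum>\<^sub>S ?L \<beta>"
    unfolding prodT_def copT_def by (simp add: expand_simps, (simp add: contract_simps)?)
  show "\<Sum>\<^sub>S ?L \<beta> = \<Sum>\<^sub>S ?R \<beta>"
    using comult_of_product product_of_comults ext_comult_simple[OF f4, of "(one A, g)" "(a, one H)"] by simp
qed

lemma cocycle_swap_necessary: "teq2 (scl H) (scl A)
    [(mul H g1 h1, f g2 h2). (g1, g2) \<leftarrow> cop H g, (h1, h2) \<leftarrow> cop H h]
    [(mul H g2 h2, f g1 h1). (g1, g2) \<leftarrow> cop H g, (h1, h2) \<leftarrow> cop H h]" (is "teq2 _ _ ?L ?R")
  unfolding teq2_def
proof (intro allI impI)
  fix \<beta> assume "form2 (scl H) (scl A) \<beta>"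
  then have b: "bil (scl H) (scl A) \<beta>" using form2_iff vsH vsA by blast
  note bilD[OF b, simp]
  have f4: "form4 (scl A) (scl H) (scl A) (scl H) (\<lambda>x1 y1 x2 y2. cou A x1 * \<beta> y1 x2 * cou H y2)"
    by (rule form4I[OF vsA vsH vsA vsH]) (simp_all add: algebra_simps)
  have comult_of_product: "sum_list (map (\<lambda>(x1,x2,x3,x4). cou A x1 * \<beta> x2 x3 * cou H x4)
      (copT A H (smul A H ra la f [(one A, g)] [(one A, h)]))) = \<Sum>\<^sub>S ?R \<beta>"
    unfolding smul_def copT_def by (simp add: expand_simps, (simp add: contract_simps)?)
  have product_of_comults: "sum_list (map (\<lambda>(x1,x2,x3,x4). cou A x1 * \<beta> x2 x3 * cou H x4)
      (prodT A H ra la f (copT A H [(one A, g)]) (copT A H [(one A, h)]))) = \<Sum>\<^sub>S ?L \<beta>"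
    unfolding prodT_def copT_def by (simp add: expand_simps, (simp add: contract_simps)?)
  show "\<Sum>\<^sub>S ?L \<beta> = \<Sum>\<^sub>S ?R \<beta>"
    using comult_of_product product_of_comults ext_comult_simple[OF f4, of "(one A, g)" "(one A, h)"] by simp
qed

end

theorem mainTheorem3:
  fixes A :: "('k::field, 'a::ab_group_add) bistr"
    and H :: "('k, 'h::ab_group_add) bistr"
    and ra :: "'h \<Rightarrow> 'a \<Rightarrow> 'h" and la :: "'h \<Rightarrow> 'a \<Rightarrow> 'a" and f :: "'h \<Rightarrow> 'h \<Rightarrow> 'a"
  assumes "bialg A"
    and "ext_datum A H ra la f"
    and "\<forall>h a. ra h a = scl H (cou A a) h"
  shows "(bialg_ext A H ra la f \<longleftrightarrow>
            bialg H
          \<and> (\<forall>g h a.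
               sum_list [mul A (la g1 (la h1 a)) (f g2 h2). (g1, g2) \<leftarrow> cop H g, (h1, h2) \<leftarrow> cop H h]
             = sum_list [mul A (f g1 h1) (la (mul H g2 h2) a). (g1, g2) \<leftarrow> cop H g, (h1, h2) \<leftarrow> cop H h])
          \<and> (\<forall>g h l.
               sum_list [mul A (la g1 (f h1 l1)) (f g2 (mul H h2 l2)).
                          (g1, g2) \<leftarrow> cop H g, (h1, h2) \<leftarrow> cop H h, (l1, l2) \<leftarrow> cop H l]
             = sum_list [mul A (f g1 h1) (f (mul H g2 h2) l). (g1, g2) \<leftarrow> cop H g, (h1, h2) \<leftarrow> cop H h])
          \<and> (\<forall>g a b. la g (mul A a b) = sum_list [mul A (la g1 a) (la g2 b). (g1, g2) \<leftarrow> cop H g])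
          \<and> (\<forall>g a. teq2 (scl H) (scl A) [(g1, la g2 a). (g1, g2) \<leftarrow> cop H g]
                                        [(g2, la g1 a). (g1, g2) \<leftarrow> cop H g])
          \<and> (\<forall>g h. teq2 (scl H) (scl A)
                     [(mul H g1 h1, f g2 h2). (g1, g2) \<leftarrow> cop H g, (h1, h2) \<leftarrow> cop H h]
                     [(mul H g2 h2, f g1 h1). (g1, g2) \<leftarrow> cop H g, (h1, h2) \<leftarrow> cop H h]))
       \<and> (bialg_ext A H ra la f \<longrightarrow>
            (\<forall>a h c g. teq2 (scl A) (scl H) (smash A H ra la f (a, h) (c, g))
               [(mul A (mul A a (la h1 c)) (f h2 g1), mul H h3 g2).
                  (h1, h2, h3) \<leftarrow> cop3 H h, (g1, g2) \<leftarrow> cop H g]))"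
proof -
  have trivial_datum: "trivial_right_action A H ra la f" using assms by unfold_locales
  interpret trivial_right_action A H ra la f by (fact trivial_datum)
  have "bialg_ext A H ra la f \<longleftrightarrow> crossed_conditions_axioms A H la f"
  proof
    assume "bialg_ext A H ra la f"
    then interpret trivial_bialg_ext A H ra la f by unfold_locales
    show "crossed_conditions_axioms A H la f"
      unfolding crossed_conditions_axioms_def
      using H_bialg twisted_module_necessary cocycle_necessary measuring_necessary
        action_swap_necessary cocycle_swap_necessary by blast
  next
    assume "crossed_conditions_axioms A H la f"
    with trivial_datum interpret crossed_conditions A H ra la f by (rule crossed_conditions.intro)
    show "bialg_ext A H ra la f" by (rule bialg_ext_of_conditions)
  qed
  then show ?thesis using smash_crossed_product unfolding crossed_conditions_axioms_def by blast
qed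

end
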